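(* Let $G$ be a finite simple (unweighted) graph with $n\ge1$ vertices. Then for every $k\ge1$, \[[x^k]\tau_G=(-1)^{n+k}\sum_{m=1}^{k}\binom{n-m}{k-m}[x^m]\chi_G,\] where $\chi_G$ is the chromatic polynomial of $G$.
   Context: $X_G=\sum_\kappa\prod_{v}x_{\kappa(v)}$ over proper colourings $\kappa:V(G)\to\{1,2,\dots\}$. $P_\lambda$ is the disjoint union of paths $P_{\lambda_1},\dots,P_{\lambda_{\ell(\lambda)}}$ ($P_n$ the path on $n$ vertices), and $\{X_{P_\lambda}\}$ is a basis of the algebra of symmetric functions over $\mathbb{Q}$. The tree polynomial is $\tau_G(x)=\sum_\lambda a_\lambda x^{\ell(\lambda)}$ where $X_G=\sum_\lambda a_\lambda X_{P_\lambda}$. $[x^k]q$ denotes the coefficient of $x^k$ in a polynomial $q$. *)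

theory Defs
  imports "HOL-Library.FuncSet" "HOL-Computational_Algebra.Polynomial"
begin

text \<open>A finite simple graph is given by a finite vertex set V and a symmetric,
irreflexive adjacency relation E (only its restriction to V matters).\<close>

definition simple_graph :: "'a set \<Rightarrow> ('a \<Rightarrow> 'a \<Rightarrow> bool) \<Rightarrow> bool" where
  "simple_graph V E \<longleftrightarrow> finite V \<and> (\<forall>u v. E u v \<longrightarrow> E v u) \<and> (\<forall>v. \<not> E v v)"

definition proper_colouring :: "'a set \<Rightarrow> ('a \<Rightarrow> 'a \<Rightarrow> bool) \<Rightarrow> ('a \<Rightarrow> nat) \<Rightarrow> bool" where
  "proper_colouring V E \<kappa> \<longleftrightarrow> (\<forall>u\<in>V. \<forall>v\<in>V. E u v \<longrightarrow> \<kappa> u \<noteq> \<kappa> v)"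

text \<open>Coefficient of the monomial \<open>\<Prod>i x_i^(\<alpha> i)\<close> in the chromatic symmetric function
X_G: the number of proper colourings \<open>\<kappa> : V \<rightarrow> {1,2,...}\<close> in which colour i is used
exactly \<open>\<alpha> i\<close> times.  (Variables are indexed by positive naturals; \<open>\<alpha> 0\<close> is the
exponent of a non-existent variable, so the coefficient vanishes unless \<open>\<alpha> 0 = 0\<close>.)
A symmetric function is determined by these coefficients.\<close>

definition csf_coeff :: "'a set \<Rightarrow> ('a \<Rightarrow> 'a \<Rightarrow> bool) \<Rightarrow> (nat \<Rightarrow> nat) \<Rightarrow> nat" where
  "csf_coeff V E \<alpha> = card {\<kappa>. \<kappa> \<in> V \<rightarrow>\<^sub>E {1..} \<and> proper_colouring V E \<kappa> \<and>
                               (\<forall>i. card {v\<in>V. \<kappa> v = i} = \<alpha> i)}"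

definition partitions :: "nat \<Rightarrow> nat list set" where
  "partitions n = {lam. sorted_wrt (\<ge>) lam \<and> 0 \<notin> set lam \<and> sum_list lam = n}"

text \<open>The graph P_lam: disjoint union of paths P_{lam_1}, ..., P_{lam_l}.
Vertex (j,i) is the i-th vertex of the j-th path.\<close>

definition path_vertices :: "nat list \<Rightarrow> (nat \<times> nat) set" where
  "path_vertices lam = {(j, i). j < length lam \<and> i < lam ! j}"

definition path_edges :: "nat list \<Rightarrow> (nat \<times> nat) \<Rightarrow> (nat \<times> nat) \<Rightarrow> bool" where
  "path_edges lam u v \<longleftrightarrow> fst u = fst v \<and> (snd v = snd u + 1 \<or> snd u = snd v + 1)"

text \<open>Coefficients a_lam of X_G in the basis {X_{P_lam}} (only partitions of |V| can occur,
by homogeneity), and the tree polynomial \<open>\<tau>_G(x) = \<Sum>_lam a_lam x^{\<ell>(lam)}\<close>.\<close>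

definition tree_coeffs :: "'a set \<Rightarrow> ('a \<Rightarrow> 'a \<Rightarrow> bool) \<Rightarrow> nat list \<Rightarrow> rat" where
  "tree_coeffs V E = (THE a. (\<forall>lam. lam \<notin> partitions (card V) \<longrightarrow> a lam = 0) \<and>
      (\<forall>\<alpha>. of_nat (csf_coeff V E \<alpha>) =
            (\<Sum>lam\<in>partitions (card V). a lam * of_nat (csf_coeff (path_vertices lam) (path_edges lam) \<alpha>))))"

definition tree_poly :: "'a set \<Rightarrow> ('a \<Rightarrow> 'a \<Rightarrow> bool) \<Rightarrow> rat poly" where
  "tree_poly V E = (\<Sum>lam\<in>partitions (card V). monom (tree_coeffs V E lam) (length lam))"

definition chromatic_poly :: "'a set \<Rightarrow> ('a \<Rightarrow> 'a \<Rightarrow> bool) \<Rightarrow> rat poly" where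
  "chromatic_poly V E = (THE p. \<forall>q::nat. poly p (of_nat q) =
      of_nat (card {\<kappa>. \<kappa> \<in> V \<rightarrow>\<^sub>E {1..q} \<and> proper_colouring V E \<kappa>}))"

end

theory Submission
  imports Defs "HOL-Combinatorics.Permutations"
begin

text \<open>Vertex-weighted chromatic symmetric functions satisfy deletion-contraction. This shows first
  that every \<open>X\<^sub>G\<close> is a combination of power sums \<open>p\<^sub>\<lambda>\<close>, and then that for path forests the
  expansion is triangular: \<open>X(P\<^sub>\<lambda>) = (-1)^(n - \<ell>(\<lambda>)) p\<^sub>\<lambda>\<close> plus power sums of longer partitions.
  Hence the \<open>X(P\<^sub>\<lambda>)\<close> form a basis and the coefficients \<open>a\<^sub>\<lambda>\<close> of \<open>\<tau>\<^sub>G\<close> are well defined.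
  Specialising to \<open>q\<close> colours, a forest with \<open>n\<close> vertices and \<open>\<ell>\<close> components has
  \<open>q^\<ell> (q - 1)^(n - \<ell>)\<close> proper colourings, so \<open>\<chi>\<^sub>G(x) = \<Sum>\<^sub>\<lambda> a\<^sub>\<lambda> x^\<ell>(\<lambda>) (x - 1)^(n - \<ell>(\<lambda>))\<close>,
  while \<open>\<tau>\<^sub>G(x) = \<Sum>\<^sub>\<lambda> a\<^sub>\<lambda> x^\<ell>(\<lambda>)\<close>. The involution \<open>p(x) \<mapsto> (x - 1)^n p(x / (x - 1))\<close>
  carries \<open>\<chi>\<^sub>G\<close> to \<open>\<tau>\<^sub>G\<close>, and expanding it coefficientwise gives the formula.\<close>

section \<open>Weighted chromatic symmetric functions\<close>

text \<open>A vertex \<open>v\<close> of colour \<open>i\<close> contributes \<open>x\<^sub>i^(w v)\<close>, so \<open>\<alpha>\<close> is the exponent vector of a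
  monomial; the weights make the class of these functions closed under edge contraction.\<close>

definition colour_class_weight :: "'v set \<Rightarrow> ('v \<Rightarrow> nat) \<Rightarrow> ('v \<Rightarrow> nat) \<Rightarrow> nat \<Rightarrow> nat" where
  "colour_class_weight V w \<kappa> i = (\<Sum>v\<in>{v\<in>V. \<kappa> v = i}. w v)"

definition weighted_colourings ::
    "'v set \<Rightarrow> ('v \<Rightarrow> 'v \<Rightarrow> bool) \<Rightarrow> ('v \<Rightarrow> nat) \<Rightarrow> (nat \<Rightarrow> nat) \<Rightarrow> ('v \<Rightarrow> nat) set" where
  "weighted_colourings V E w \<alpha> =
     {\<kappa> \<in> V \<rightarrow>\<^sub>E {1..}. proper_colouring V E \<kappa> \<and> colour_class_weight V w \<kappa> = \<alpha>}"

definition weighted_csf_coeff :: "'v set \<Rightarrow> ('v \<Rightarrow> 'v \<Rightarrow> bool) \<Rightarrow> ('v \<Rightarrow> nat) \<Rightarrow> (nat \<Rightarrow> nat) \<Rightarrow> nat" where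
  "weighted_csf_coeff V E w \<alpha> = card (weighted_colourings V E w \<alpha>)"

lemma csf_coeff_eq_weighted: "csf_coeff V E \<alpha> = weighted_csf_coeff V E (\<lambda>_. 1) \<alpha>"
  unfolding csf_coeff_def weighted_csf_coeff_def weighted_colourings_def colour_class_weight_def
  by (simp add: fun_eq_iff conj_assoc)

lemma colour_class_weight_cong:
  "(\<And>x. x \<in> V \<Longrightarrow> \<kappa> x = \<kappa>' x) \<Longrightarrow> (\<And>x. x \<in> V \<Longrightarrow> w x = w' x) \<Longrightarrow>
    colour_class_weight V w \<kappa> = colour_class_weight V w' \<kappa>'"
  unfolding colour_class_weight_def by (intro ext sum.cong) auto

lemma proper_colouring_cong:
  "(\<And>x. x \<in> V \<Longrightarrow> \<kappa> x = \<kappa>' x) \<Longrightarrow> (\<And>x y. x \<in> V \<Longrightarrow> y \<in> V \<Longrightarrow> E x y = E' x y) \<Longrightarrow>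
    proper_colouring V E \<kappa> = proper_colouring V E' \<kappa>'"
  unfolding proper_colouring_def by auto

lemma finite_weighted_colourings:
  assumes "finite V" and "\<And>x. x \<in> V \<Longrightarrow> 0 < w x"
  shows "finite (weighted_colourings V E w \<alpha>)"
proof (cases "weighted_colourings V E w \<alpha> = {}")
  case False
  then obtain \<kappa>\<^sub>0 where \<kappa>\<^sub>0: "\<kappa>\<^sub>0 \<in> weighted_colourings V E w \<alpha>" by blast
  have "weighted_colourings V E w \<alpha> \<subseteq> V \<rightarrow>\<^sub>E \<kappa>\<^sub>0 ` V"
  proof (intro subsetI PiE_I)
    fix \<kappa> x assume \<kappa>: "\<kappa> \<in> weighted_colourings V E w \<alpha>" and x: "x \<in> V"
    have "0 < w x" using assms x by auto
    also have "w x \<le> colour_class_weight V w \<kappa> (\<kappa> x)"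
      unfolding colour_class_weight_def by (rule member_le_sum) (use x assms in auto)
    also have "\<dots> = colour_class_weight V w \<kappa>\<^sub>0 (\<kappa> x)"
      using \<kappa> \<kappa>\<^sub>0 by (simp add: weighted_colourings_def)
    finally show "\<kappa> x \<in> \<kappa>\<^sub>0 ` V"
      unfolding colour_class_weight_def by (metis (mono_tags, lifting) empty_Collect_eq image_eqI less_irrefl sum.empty)
  qed (auto simp: weighted_colourings_def)
  then show ?thesis by (rule finite_subset) (use assms in \<open>auto intro: finite_PiE\<close>)
qed simp

lemma weighted_colouring_pullback:
  assumes g: "bij_betw g V' V"
    and adj: "\<And>x y. x \<in> V' \<Longrightarrow> y \<in> V' \<Longrightarrow> E (g x) (g y) = E' x y"
    and weight: "\<And>x. x \<in> V' \<Longrightarrow> w (g x) = w' x"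
    and \<kappa>: "\<kappa> \<in> weighted_colourings V E w \<alpha>"
  shows "restrict (\<kappa> \<circ> g) V' \<in> weighted_colourings V' E' w' \<alpha>"
proof -
  have "colour_class_weight V' w' (\<kappa> \<circ> g) i = colour_class_weight V w \<kappa> i" for i
  proof -
    have "bij_betw g {x\<in>V'. \<kappa> (g x) = i} {v\<in>V. \<kappa> v = i}"
      by (rule bij_betw_Collect[OF g]) simp
    then show ?thesis
      unfolding colour_class_weight_def using weight by (auto simp: sum.reindex_bij_betw[symmetric])
  qed
  moreover have "colour_class_weight V' w' (restrict (\<kappa> \<circ> g) V') = colour_class_weight V' w' (\<kappa> \<circ> g)"
    by (rule colour_class_weight_cong) auto
  moreover have "g x \<in> V" if "x \<in> V'" for x
    using bij_betwE[OF g] that by blast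
  ultimately show ?thesis
    using \<kappa> adj unfolding weighted_colourings_def proper_colouring_def by auto
qed

lemma weighted_csf_coeff_iso:
  assumes f: "bij_betw f V V'"
    and adj: "\<And>x y. x \<in> V \<Longrightarrow> y \<in> V \<Longrightarrow> E' (f x) (f y) = E x y"
    and weight: "\<And>x. x \<in> V \<Longrightarrow> w' (f x) = w x"
  shows "weighted_csf_coeff V E w \<alpha> = weighted_csf_coeff V' E' w' \<alpha>"
proof -
  define g where "g = inv_into V f"
  have g: "bij_betw g V' V" unfolding g_def by (rule bij_betw_inv_into[OF f])
  have f_g: "f (g y) = y" if "y \<in> V'" for y
    using f that unfolding g_def by (rule bij_betw_inv_into_right)
  have g_f: "g (f x) = x" if "x \<in> V" for x
    using f that unfolding g_def by (rule bij_betw_inv_into_left)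
  have adj': "E (g x) (g y) = E' x y" if "x \<in> V'" "y \<in> V'" for x y
    using adj[of "g x" "g y"] bij_betwE[OF g] that f_g by simp
  have weight': "w (g x) = w' x" if "x \<in> V'" for x
    using weight[of "g x"] bij_betwE[OF g] that f_g by simp
  have "bij_betw (\<lambda>\<kappa>. restrict (\<kappa> \<circ> g) V') (weighted_colourings V E w \<alpha>) (weighted_colourings V' E' w' \<alpha>)"
  proof (rule bij_betw_byWitness[where f' = "\<lambda>\<kappa>. restrict (\<kappa> \<circ> f) V"])
    show "\<forall>\<kappa>\<in>weighted_colourings V E w \<alpha>. restrict (restrict (\<kappa> \<circ> g) V' \<circ> f) V = \<kappa>"
      using f g_f by (auto simp: weighted_colourings_def fun_eq_iff PiE_def extensional_def dest: bij_betwE)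
    show "\<forall>\<kappa>\<in>weighted_colourings V' E' w' \<alpha>. restrict (restrict (\<kappa> \<circ> f) V \<circ> g) V' = \<kappa>"
      using g f_g by (auto simp: weighted_colourings_def fun_eq_iff PiE_def extensional_def dest: bij_betwE)
    show "(\<lambda>\<kappa>. restrict (\<kappa> \<circ> g) V') ` weighted_colourings V E w \<alpha> \<subseteq> weighted_colourings V' E' w' \<alpha>"
      using weighted_colouring_pullback[OF g, of E E' w w'] adj' weight' by blast
    show "(\<lambda>\<kappa>. restrict (\<kappa> \<circ> f) V) ` weighted_colourings V' E' w' \<alpha> \<subseteq> weighted_colourings V E w \<alpha>"
      using weighted_colouring_pullback[OF f, of E' E w' w] adj weight by blast
  qed
  then show ?thesis unfolding weighted_csf_coeff_def by (rule bij_betw_same_card)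
qed

lemma weighted_csf_coeff_cong:
  "(\<And>x y. x \<in> V \<Longrightarrow> y \<in> V \<Longrightarrow> E x y = E' x y) \<Longrightarrow> (\<And>x. x \<in> V \<Longrightarrow> w x = w' x) \<Longrightarrow>
    weighted_csf_coeff V E w \<alpha> = weighted_csf_coeff V E' w' \<alpha>"
  by (rule weighted_csf_coeff_iso[where f = id]) auto

section \<open>Deletion and contraction\<close>

definition delete_edge :: "('v \<Rightarrow> 'v \<Rightarrow> bool) \<Rightarrow> 'v \<Rightarrow> 'v \<Rightarrow> 'v \<Rightarrow> 'v \<Rightarrow> bool" where
  "delete_edge E u v x y \<longleftrightarrow> E x y \<and> \<not> (x = u \<and> y = v) \<and> \<not> (x = v \<and> y = u)"

text \<open>Contracting the edge \<open>uv\<close> merges \<open>v\<close> into \<open>u\<close>: the contracted graph lives on \<open>V - {v}\<close>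
  and \<open>u\<close> carries the weight \<open>w u + w v\<close>.\<close>

definition contract_edge :: "('v \<Rightarrow> 'v \<Rightarrow> bool) \<Rightarrow> 'v \<Rightarrow> 'v \<Rightarrow> 'v \<Rightarrow> 'v \<Rightarrow> bool" where
  "contract_edge E u v x y \<longleftrightarrow> x \<noteq> y \<and> (E x y \<or> (x = u \<and> E v y) \<or> (y = u \<and> E x v))"

lemma sum_fun_upd_add:
  fixes f :: "'a \<Rightarrow> 'b :: comm_monoid_add"
  assumes "finite A" "a \<in> A"
  shows "sum (f(a := f a + c)) A = sum f A + c"
proof -
  have "sum (f(a := f a + c)) A = (f a + c) + sum (f(a := f a + c)) (A - {a})"
    using sum.remove[OF assms, of "f(a := f a + c)"] by simp
  also have "sum (f(a := f a + c)) (A - {a}) = sum f (A - {a})" by (rule sum.cong) auto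
  finally show ?thesis using sum.remove[OF assms, of f] by (simp add: ac_simps)
qed

lemma sum_weight_contract:
  assumes "finite V" "u \<in> V" "v \<in> V" "u \<noteq> v"
  shows "sum (w(u := w u + w v)) (V - {v}) = sum w V"
  using assms sum_fun_upd_add[of "V - {v}" u w "w v"] sum.remove[of V v w] by (simp add: add.commute)

lemma colour_class_weight_contract:
  assumes "finite V" "u \<in> V" "v \<in> V" "u \<noteq> v" "\<kappa> u = \<kappa> v"
  shows "colour_class_weight (V - {v}) (w(u := w u + w v)) \<kappa> = colour_class_weight V w \<kappa>"
proof
  fix i
  let ?S = "{x\<in>V - {v}. \<kappa> x = i}"
  have fin: "finite ?S" using assms(1) by simp
  show "colour_class_weight (V - {v}) (w(u := w u + w v)) \<kappa> i = colour_class_weight V w \<kappa> i"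
  proof (cases "\<kappa> u = i")
    case True
    then have classes: "{x\<in>V. \<kappa> x = i} = insert v ?S" and u: "u \<in> ?S" using assms by auto
    have "sum (w(u := w u + w v)) ?S = sum w ?S + w v" using fin u by (rule sum_fun_upd_add)
    also have "\<dots> = sum w (insert v ?S)" using fin by (simp add: sum.insert)
    finally show ?thesis unfolding colour_class_weight_def classes .
  next
    case False
    then have "{x\<in>V. \<kappa> x = i} = ?S" "u \<notin> ?S" using assms by auto
    then show ?thesis unfolding colour_class_weight_def by (metis (no_types, lifting) fun_upd_other sum.cong)
  qed
qed

lemma card_edges_delete_edge_less:
  assumes "finite V" "u \<in> V" "v \<in> V" "E u v"
  shows "card {(x, y) \<in> V \<times> V. delete_edge E u v x y} < card {(x, y) \<in> V \<times> V. E x y}"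
proof (rule psubset_card_mono)
  show "finite {(x, y) \<in> V \<times> V. E x y}" using assms(1) by (auto intro: finite_subset[of _ "V \<times> V"])
  have "(u, v) \<in> {(x, y) \<in> V \<times> V. E x y} - {(x, y) \<in> V \<times> V. delete_edge E u v x y}"
    using assms(2-4) by (simp add: delete_edge_def)
  then show "{(x, y) \<in> V \<times> V. delete_edge E u v x y} \<subset> {(x, y) \<in> V \<times> V. E x y}"
    by (auto simp: delete_edge_def)
qed

lemma proper_colouring_contract_iff:
  assumes "u \<in> V" "v \<in> V" "u \<noteq> v" "\<And>x. x \<in> V \<Longrightarrow> \<not> E x x" "\<kappa> u = \<kappa> v"
  shows "proper_colouring (V - {v}) (contract_edge E u v) \<kappa> \<longleftrightarrow> proper_colouring V (delete_edge E u v) \<kappa>"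
proof
  assume proper: "proper_colouring (V - {v}) (contract_edge E u v) \<kappa>"
  show "proper_colouring V (delete_edge E u v) \<kappa>"
    unfolding proper_colouring_def
  proof (intro ballI impI)
    fix x y assume x: "x \<in> V" and y: "y \<in> V" and e: "delete_edge E u v x y"
    then have "x \<noteq> y" "E x y" "\<not> (x = u \<and> y = v)" "\<not> (x = v \<and> y = u)"
      using assms(4) by (auto simp: delete_edge_def)
    then consider "x = v" "y \<in> V - {v}" "contract_edge E u v u y"
      | "y = v" "x \<in> V - {v}" "contract_edge E u v x u"
      | "x \<in> V - {v}" "y \<in> V - {v}" "contract_edge E u v x y"
      using x y assms(3) unfolding contract_edge_def by auto
    moreover have "u \<in> V - {v}" using assms(1,3) by simp
    ultimately show "\<kappa> x \<noteq> \<kappa> y"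
      using proper assms(5) unfolding proper_colouring_def by cases fastforce+
  qed
next
  assume proper: "proper_colouring V (delete_edge E u v) \<kappa>"
  show "proper_colouring (V - {v}) (contract_edge E u v) \<kappa>"
    unfolding proper_colouring_def
  proof (intro ballI impI)
    fix x y assume x: "x \<in> V - {v}" and y: "y \<in> V - {v}" and e: "contract_edge E u v x y"
    then consider "delete_edge E u v x y" | "x = u" "delete_edge E u v v y" | "y = u" "delete_edge E u v x v"
      unfolding contract_edge_def delete_edge_def by auto
    then show "\<kappa> x \<noteq> \<kappa> y"
      using proper x y assms(2,5) unfolding proper_colouring_def by cases auto
  qed
qed

lemma proper_colouring_delete_edge_iff:
  assumes "u \<in> V" "v \<in> V" "E u v"
  shows "proper_colouring V E \<kappa> \<longleftrightarrow> proper_colouring V (delete_edge E u v) \<kappa> \<and> \<kappa> u \<noteq> \<kappa> v"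
proof
  assume "proper_colouring V E \<kappa>"
  then show "proper_colouring V (delete_edge E u v) \<kappa> \<and> \<kappa> u \<noteq> \<kappa> v"
    using assms unfolding proper_colouring_def delete_edge_def by auto
next
  assume proper: "proper_colouring V (delete_edge E u v) \<kappa> \<and> \<kappa> u \<noteq> \<kappa> v"
  show "proper_colouring V E \<kappa>"
    unfolding proper_colouring_def
  proof (intro ballI impI)
    fix x y assume "x \<in> V" "y \<in> V" "E x y"
    then show "\<kappa> x \<noteq> \<kappa> y"
      using proper unfolding proper_colouring_def delete_edge_def
      by (cases "x = u \<and> y = v \<or> x = v \<and> y = u") auto
  qed
qed

lemma merged_colouring_iff:
  assumes "finite V" "u \<in> V" "v \<in> V" "u \<noteq> v" "\<And>x. x \<in> V \<Longrightarrow> \<not> E x x"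
    and "\<kappa> \<in> extensional V" "\<kappa> u = \<kappa> v"
  shows "\<kappa> \<in> weighted_colourings V (delete_edge E u v) w \<alpha> \<longleftrightarrow>
    restrict \<kappa> (V - {v}) \<in> weighted_colourings (V - {v}) (contract_edge E u v) (w(u := w u + w v)) \<alpha>"
proof -
  let ?V' = "V - {v}"
  have "(\<forall>x\<in>V. 1 \<le> \<kappa> x) \<longleftrightarrow> (\<forall>x\<in>?V'. 1 \<le> \<kappa> x)"
    using assms(2,4,7) by (metis Diff_iff Diff_subset singletonD subsetD)
  then have "\<kappa> \<in> V \<rightarrow>\<^sub>E {1..} \<longleftrightarrow> (\<forall>x\<in>?V'. 1 \<le> \<kappa> x)"
    using assms(6) by (simp add: PiE_iff)
  moreover have "proper_colouring ?V' (contract_edge E u v) (restrict \<kappa> ?V') = proper_colouring ?V' (contract_edge E u v) \<kappa>"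
    by (rule proper_colouring_cong) simp_all
  moreover have "colour_class_weight ?V' (w(u := w u + w v)) (restrict \<kappa> ?V') = colour_class_weight ?V' (w(u := w u + w v)) \<kappa>"
    by (rule colour_class_weight_cong) simp_all
  ultimately show ?thesis
    using proper_colouring_contract_iff[of u V v E \<kappa>, OF assms(2-5,7)]
      colour_class_weight_contract[of V u v \<kappa> w, OF assms(1-4,7)] assms(6)
    by (simp add: weighted_colourings_def PiE_iff)
qed

lemma bij_betw_merged_colourings_contract:
  assumes "finite V" "u \<in> V" "v \<in> V" "u \<noteq> v" "\<And>x. x \<in> V \<Longrightarrow> \<not> E x x"
  shows "bij_betw (\<lambda>\<kappa>. restrict \<kappa> (V - {v}))
    {\<kappa> \<in> weighted_colourings V (delete_edge E u v) w \<alpha>. \<kappa> u = \<kappa> v}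
    (weighted_colourings (V - {v}) (contract_edge E u v) (w(u := w u + w v)) \<alpha>)"
proof (rule bij_betw_byWitness[where f' = "\<lambda>\<kappa>. restrict (\<kappa>(v := \<kappa> u)) V"])
  let ?V' = "V - {v}" and ?E' = "contract_edge E u v" and ?w' = "w(u := w u + w v)"
  note merged = merged_colouring_iff[of V u v E, OF assms]
  show "\<forall>\<kappa>\<in>{\<kappa> \<in> weighted_colourings V (delete_edge E u v) w \<alpha>. \<kappa> u = \<kappa> v}.
      restrict ((restrict \<kappa> ?V')(v := restrict \<kappa> ?V' u)) V = \<kappa>"
    using assms(2,4) by (auto simp: weighted_colourings_def fun_eq_iff PiE_def extensional_def)
  show "\<forall>\<kappa>\<in>weighted_colourings ?V' ?E' ?w' \<alpha>. restrict (restrict (\<kappa>(v := \<kappa> u)) V) ?V' = \<kappa>"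
    by (auto simp: weighted_colourings_def fun_eq_iff PiE_def extensional_def)
  then show "(\<lambda>\<kappa>. restrict (\<kappa>(v := \<kappa> u)) V) ` weighted_colourings ?V' ?E' ?w' \<alpha>
      \<subseteq> {\<kappa> \<in> weighted_colourings V (delete_edge E u v) w \<alpha>. \<kappa> u = \<kappa> v}"
    using merged assms(2-4) by auto
  show "(\<lambda>\<kappa>. restrict \<kappa> ?V') ` {\<kappa> \<in> weighted_colourings V (delete_edge E u v) w \<alpha>. \<kappa> u = \<kappa> v}
      \<subseteq> weighted_colourings ?V' ?E' ?w' \<alpha>"
    using merged by (auto simp: weighted_colourings_def PiE_def)
qed

theorem weighted_csf_coeff_deletion_contraction:
  assumes "finite V" "u \<in> V" "v \<in> V" "u \<noteq> v" "E u v"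
    and "\<And>x. x \<in> V \<Longrightarrow> \<not> E x x" and "\<And>x. x \<in> V \<Longrightarrow> 0 < w x"
  shows "weighted_csf_coeff V (delete_edge E u v) w \<alpha> =
    weighted_csf_coeff V E w \<alpha> + weighted_csf_coeff (V - {v}) (contract_edge E u v) (w(u := w u + w v)) \<alpha>"
proof -
  let ?D = "weighted_colourings V (delete_edge E u v) w \<alpha>"
  have "finite ?D" using assms(1,7) by (rule finite_weighted_colourings)
  then have "card ?D = card {\<kappa> \<in> ?D. \<kappa> u \<noteq> \<kappa> v} + card {\<kappa> \<in> ?D. \<kappa> u = \<kappa> v}"
    by (subst card_Un_disjoint[symmetric]) (auto intro: arg_cong[where f = card])
  also have "{\<kappa> \<in> ?D. \<kappa> u \<noteq> \<kappa> v} = weighted_colourings V E w \<alpha>"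
    using proper_colouring_delete_edge_iff[of u V v E, OF assms(2,3,5)] by (auto simp: weighted_colourings_def)
  also have "card {\<kappa> \<in> ?D. \<kappa> u = \<kappa> v} = weighted_csf_coeff (V - {v}) (contract_edge E u v) (w(u := w u + w v)) \<alpha>"
    unfolding weighted_csf_coeff_def
    by (rule bij_betw_same_card[OF bij_betw_merged_colourings_contract[OF assms(1-4,6)]])
  finally show ?thesis unfolding weighted_csf_coeff_def .
qed

section \<open>Power sums and partitions\<close>

text \<open>The edgeless graph with vertex weights \<open>\<nu>\<close> has the power sum \<open>p\<^sub>\<nu>\<close> as its chromatic
  symmetric function.\<close>

definition power_sum_coeff :: "nat list \<Rightarrow> (nat \<Rightarrow> nat) \<Rightarrow> rat" where
  "power_sum_coeff \<nu> \<alpha> = of_nat (weighted_csf_coeff {..<length \<nu>} (\<lambda>_ _. False) (nth \<nu>) \<alpha>)"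

lemma power_sum_coeff_edgeless:
  assumes "bij_betw h {..<length \<nu>} V" "\<And>x y. x \<in> V \<Longrightarrow> y \<in> V \<Longrightarrow> \<not> E x y"
    and "\<And>j. j < length \<nu> \<Longrightarrow> w (h j) = \<nu> ! j"
  shows "of_nat (weighted_csf_coeff V E w \<alpha>) = power_sum_coeff \<nu> \<alpha>"
proof -
  have "weighted_csf_coeff {..<length \<nu>} (\<lambda>_ _. False) (nth \<nu>) \<alpha> = weighted_csf_coeff V E w \<alpha>"
    by (rule weighted_csf_coeff_iso[OF assms(1)]) (use assms bij_betwE in \<open>fastforce+\<close>)
  then show ?thesis unfolding power_sum_coeff_def by simp
qed

lemma power_sum_coeff_mset_eq:
  assumes "mset \<nu> = mset \<nu>'"
  shows "power_sum_coeff \<nu> = power_sum_coeff \<nu>'"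
proof
  fix \<alpha>
  obtain p where p: "p permutes {..<length \<nu>'}" "permute_list p \<nu>' = \<nu>"
    using mset_eq_permutation[OF assms] by blast
  have len: "length \<nu> = length \<nu>'" using p(2) by (metis length_permute_list)
  have "bij_betw p {..<length \<nu>} {..<length \<nu>'}" using permutes_imp_bij[OF p(1)] len by simp
  moreover have "\<nu>' ! p j = \<nu> ! j" if "j < length \<nu>" for j
    using that len p(2) by (auto simp: permute_list_def)
  ultimately have "power_sum_coeff \<nu>' \<alpha> = power_sum_coeff \<nu> \<alpha>"
    unfolding power_sum_coeff_def[of \<nu>'] by (intro power_sum_coeff_edgeless) auto
  then show "power_sum_coeff \<nu> \<alpha> = power_sum_coeff \<nu>' \<alpha>" ..
qed

definition sort_desc :: "nat list \<Rightarrow> nat list" where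
  "sort_desc xs = rev (sort xs)"

lemma mset_sort_desc [simp]: "mset (sort_desc xs) = mset xs"
  by (simp add: sort_desc_def)

lemma length_sort_desc [simp]: "length (sort_desc xs) = length xs"
  by (simp add: sort_desc_def)

lemma sort_desc_in_partitions: "0 \<notin> set xs \<Longrightarrow> sort_desc xs \<in> partitions (sum_list xs)"
  unfolding partitions_def sort_desc_def
  by (auto simp: sorted_wrt_rev) (metis mset_sort sum_mset_sum_list)

lemma sort_desc_eq_iff_mset:
  assumes "sorted_wrt (\<ge>) xs"
  shows "sort_desc ys = xs \<longleftrightarrow> mset ys = mset xs"
proof
  assume "mset ys = mset xs"
  then have "sort ys = rev xs" using assms by (intro properties_for_sort) (auto simp: sorted_wrt_rev)
  then show "sort_desc ys = xs" by (simp add: sort_desc_def)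
qed (metis mset_sort_desc)

lemma partitions_mset_eq:
  assumes "lam \<in> partitions n" "mu \<in> partitions m" "mset lam = mset mu"
  shows "lam = mu"
proof -
  have "sort_desc lam = mu" "sort_desc lam = lam"
    using assms sort_desc_eq_iff_mset[of mu lam] sort_desc_eq_iff_mset[of lam lam]
    by (simp_all add: partitions_def)
  then show ?thesis by simp
qed

lemma partitions_nth_pos:
  assumes "lam \<in> partitions n" "j < length lam"
  shows "0 < lam ! j"
proof -
  have "lam ! j \<in> set lam" using assms(2) by simp
  then show ?thesis using assms(1) unfolding partitions_def by (cases "lam ! j = 0") auto
qed

lemma length_le_sum_list: "0 \<notin> set (xs :: nat list) \<Longrightarrow> length xs \<le> sum_list xs"
  by (induction xs) (auto simp: Suc_le_eq)

lemma partitions_length_le: "lam \<in> partitions n \<Longrightarrow> length lam \<le> n"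
  unfolding partitions_def using length_le_sum_list by auto

lemma partitions_length_pos: "lam \<in> partitions n \<Longrightarrow> 1 \<le> n \<Longrightarrow> 1 \<le> length lam"
  unfolding partitions_def by (cases lam) auto

lemma finite_partitions: "finite (partitions n)"
proof (rule finite_subset)
  show "partitions n \<subseteq> {xs. set xs \<subseteq> {..n} \<and> length xs \<le> n}"
    unfolding partitions_def using length_le_sum_list elem_le_sum_list
    by (force simp: in_set_conv_nth)
  show "finite {xs. set xs \<subseteq> {..n} \<and> length xs \<le> n}" by (rule finite_lists_length_le) simp
qed

section \<open>Expansion in power sums\<close>

definition spanned_by :: "('i \<Rightarrow> 'x \<Rightarrow> 'r :: comm_ring_1) \<Rightarrow> 'i set \<Rightarrow> ('x \<Rightarrow> 'r) \<Rightarrow> bool" where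
  "spanned_by B S f \<longleftrightarrow> (\<exists>c. \<forall>x. f x = (\<Sum>i\<in>S. c i * B i x))"

lemma spanned_by_add:
  assumes "spanned_by B S f" "spanned_by B S g"
  shows "spanned_by B S (\<lambda>x. f x + g x)"
proof -
  obtain c d where "\<forall>x. f x = (\<Sum>i\<in>S. c i * B i x)" "\<forall>x. g x = (\<Sum>i\<in>S. d i * B i x)"
    using assms unfolding spanned_by_def by blast
  then show ?thesis unfolding spanned_by_def
    by (intro exI[of _ "\<lambda>i. c i + d i"]) (simp add: sum.distrib distrib_right)
qed

lemma spanned_by_scale:
  assumes "spanned_by B S f"
  shows "spanned_by B S (\<lambda>x. r * f x)"
proof -
  obtain c where "\<forall>x. f x = (\<Sum>i\<in>S. c i * B i x)" using assms unfolding spanned_by_def by blast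
  then show ?thesis unfolding spanned_by_def
    by (intro exI[of _ "\<lambda>i. r * c i"]) (simp add: sum_distrib_left mult.assoc)
qed

lemma spanned_by_diff: "spanned_by B S f \<Longrightarrow> spanned_by B S g \<Longrightarrow> spanned_by B S (\<lambda>x. f x - g x)"
  using spanned_by_add[of B S f "\<lambda>x. - 1 * g x"] spanned_by_scale[of B S g "- 1"] by simp

lemma spanned_by_zero: "spanned_by B S (\<lambda>_. 0)"
  unfolding spanned_by_def by (rule exI[of _ "\<lambda>_. 0"]) simp

lemma spanned_by_basis:
  assumes "finite S" "i \<in> S"
  shows "spanned_by B S (B i)"
proof -
  have "(\<Sum>j\<in>S. (if j = i then 1 else 0) * B j x) = (\<Sum>j\<in>S. if j = i then B j x else 0)" for x
    by (rule sum.cong) auto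
  then show ?thesis
    unfolding spanned_by_def using assms by (intro exI[of _ "\<lambda>j. if j = i then 1 else 0"]) (simp add: sum.delta')
qed

lemma spanned_by_cancel_basis:
  assumes "spanned_by B S (\<lambda>x. f x - c * B i x)" "i \<in> S" "finite S"
  shows "spanned_by B S f"
  using spanned_by_add[OF assms(1) spanned_by_scale[OF spanned_by_basis[OF assms(3,2)], where r = c]] by simp

lemma spanned_by_sum:
  "finite I \<Longrightarrow> (\<And>i. i \<in> I \<Longrightarrow> spanned_by B S (g i)) \<Longrightarrow> spanned_by B S (\<lambda>x. \<Sum>i\<in>I. r i * g i x)"
proof (induction I rule: finite_induct)
  case (insert i I)
  then show ?case using spanned_by_add[OF spanned_by_scale[of B S "g i" "r i"]] by simp
qed (simp add: spanned_by_zero)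

lemma spanned_by_trans:
  assumes "spanned_by B S f" "\<And>i. i \<in> S \<Longrightarrow> spanned_by B' T (B i)" "finite S"
  shows "spanned_by B' T f"
proof -
  obtain c where "\<forall>x. f x = (\<Sum>i\<in>S. c i * B i x)" using assms(1) unfolding spanned_by_def by blast
  moreover have "spanned_by B' T (\<lambda>x. \<Sum>i\<in>S. c i * B i x)" by (rule spanned_by_sum) (use assms in auto)
  ultimately show ?thesis by (metis (no_types, lifting) ext)
qed

lemma spanned_by_obtain_coeffs:
  assumes "spanned_by B S f" "S \<subseteq> T" "finite T"
  obtains c where "\<And>i. i \<notin> S \<Longrightarrow> c i = 0" "\<And>x. f x = (\<Sum>i\<in>T. c i * B i x)"
proof -
  obtain c where c: "\<forall>x. f x = (\<Sum>i\<in>S. c i * B i x)" using assms(1) unfolding spanned_by_def by blast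
  have "(\<Sum>i\<in>T. (if i \<in> S then c i else 0) * B i x) = (\<Sum>i\<in>S. c i * B i x)" for x
  proof -
    have "(\<Sum>i\<in>T. (if i \<in> S then c i else 0) * B i x) = (\<Sum>i\<in>T. if i \<in> S then c i * B i x else 0)"
      by (rule sum.cong) auto
    also have "\<dots> = (\<Sum>i\<in>S. c i * B i x)"
      using assms(2,3) by (simp add: sum.If_cases Int_absorb1)
    finally show ?thesis .
  qed
  then show ?thesis using c by (intro that[of "\<lambda>i. if i \<in> S then c i else 0"]) auto
qed

lemma spanned_by_mono:
  assumes "spanned_by B S f" "S \<subseteq> T" "finite T"
  shows "spanned_by B T f"
proof -
  obtain c where "\<And>x. f x = (\<Sum>i\<in>T. c i * B i x)" using spanned_by_obtain_coeffs[OF assms] by metis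
  then show ?thesis unfolding spanned_by_def by blast
qed

lemma edgeless_weighted_csf_spanned_by_power_sums:
  assumes "finite V" "\<And>x y. x \<in> V \<Longrightarrow> y \<in> V \<Longrightarrow> \<not> E x y" "\<And>x. x \<in> V \<Longrightarrow> 0 < w x"
  shows "spanned_by power_sum_coeff (partitions (sum w V)) (\<lambda>\<alpha>. of_nat (weighted_csf_coeff V E w \<alpha>))"
proof -
  obtain h where h: "bij_betw h {..<card V} V"
    using ex_bij_betw_nat_finite[OF assms(1)] by (auto simp: atLeast0LessThan)
  define \<nu> where "\<nu> = map (w \<circ> h) [0..<card V]"
  have len: "length \<nu> = card V" and nth: "\<And>j. j < card V \<Longrightarrow> \<nu> ! j = w (h j)"
    by (simp_all add: \<nu>_def)
  have "sum_list \<nu> = (\<Sum>j<card V. w (h j))"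
    unfolding \<nu>_def by (simp add: sum_list_distinct_conv_sum_set atLeast0LessThan)
  also have "\<dots> = sum w V" by (rule sum.reindex_bij_betw[OF h])
  finally have "sum_list \<nu> = sum w V" .
  moreover have "0 \<notin> set \<nu>"
  proof
    assume "0 \<in> set \<nu>"
    then obtain j where "j < card V" "w (h j) = 0" by (auto simp: in_set_conv_nth len nth)
    then show False using assms(3)[of "h j"] bij_betwE[OF h] by auto
  qed
  ultimately have partition: "sort_desc \<nu> \<in> partitions (sum w V)"
    using sort_desc_in_partitions by metis
  have "of_nat (weighted_csf_coeff V E w \<alpha>) = power_sum_coeff \<nu> \<alpha>" for \<alpha>
    by (rule power_sum_coeff_edgeless) (use h assms(2) nth len in auto)
  then have "(\<lambda>\<alpha>. of_nat (weighted_csf_coeff V E w \<alpha>)) = power_sum_coeff (sort_desc \<nu>)"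
    using power_sum_coeff_mset_eq[of "sort_desc \<nu>" \<nu>] by auto
  then show ?thesis using spanned_by_basis[OF finite_partitions partition] by simp
qed

theorem weighted_csf_spanned_by_power_sums:
  assumes "finite V" "\<And>x. x \<in> V \<Longrightarrow> \<not> E x x" "\<And>x. x \<in> V \<Longrightarrow> 0 < w x"
  shows "spanned_by power_sum_coeff (partitions (sum w V)) (\<lambda>\<alpha>. of_nat (weighted_csf_coeff V E w \<alpha>))"
  using assms
proof (induction "card V" arbitrary: V E w rule: less_induct)
  case less
  note smaller_graphs = less.hyps
  define m where "m = card {(x, y) \<in> V \<times> V. E x y}"
  from less.prems m_def show ?case
  proof (induction m arbitrary: E rule: less_induct)
    case (less m E)
    have fin: "finite V" and irrefl: "\<And>x. x \<in> V \<Longrightarrow> \<not> E x x" and pos: "\<And>x. x \<in> V \<Longrightarrow> 0 < w x"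
      using less.prems by auto
    show ?case
    proof (cases "\<exists>x\<in>V. \<exists>y\<in>V. E x y")
      case False
      then show ?thesis by (intro edgeless_weighted_csf_spanned_by_power_sums[OF fin _ pos]) blast
    next
      case True
      then obtain u v where u: "u \<in> V" and v: "v \<in> V" and uv: "E u v" by blast
      have "u \<noteq> v" using irrefl u uv by auto
      let ?w' = "w(u := w u + w v)"
      have fewer_edges: "card {(x, y) \<in> V \<times> V. delete_edge E u v x y} < m"
        using card_edges_delete_edge_less[of V u v E, OF fin u v uv] less.prems(4) by simp
      have deleted: "spanned_by power_sum_coeff (partitions (sum w V))
          (\<lambda>\<alpha>. of_nat (weighted_csf_coeff V (delete_edge E u v) w \<alpha>))"
        by (rule less.IH[OF fewer_edges fin _ pos refl]) (use irrefl in \<open>simp add: delete_edge_def\<close>)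
      have "spanned_by power_sum_coeff (partitions (sum ?w' (V - {v})))
          (\<lambda>\<alpha>. of_nat (weighted_csf_coeff (V - {v}) (contract_edge E u v) ?w' \<alpha>))"
        by (rule smaller_graphs) (use fin v pos card_Diff1_less[OF fin v] in \<open>auto simp: contract_edge_def\<close>)
      then have contracted: "spanned_by power_sum_coeff (partitions (sum w V))
          (\<lambda>\<alpha>. of_nat (weighted_csf_coeff (V - {v}) (contract_edge E u v) ?w' \<alpha>))"
        by (simp only: sum_weight_contract[OF fin u v \<open>u \<noteq> v\<close>])
      have "(of_nat (weighted_csf_coeff V E w \<alpha>) :: rat) =
          of_nat (weighted_csf_coeff V (delete_edge E u v) w \<alpha>) -
          of_nat (weighted_csf_coeff (V - {v}) (contract_edge E u v) ?w' \<alpha>)" for \<alpha>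
        using weighted_csf_coeff_deletion_contraction[OF fin u v \<open>u \<noteq> v\<close> uv irrefl pos] by simp
      with spanned_by_diff[OF deleted contracted] show ?thesis by simp
    qed
  qed
qed

section \<open>Weighted path forests\<close>

text \<open>A weighted path forest is a list of paths, each given by the list of its vertex weights;
  vertex \<open>(j, i)\<close> is the \<open>i\<close>-th vertex of the \<open>j\<close>-th path, as for \<^const>\<open>path_vertices\<close>.\<close>

definition forest_vertices :: "nat list list \<Rightarrow> (nat \<times> nat) set" where
  "forest_vertices L = {(j, i). j < length L \<and> i < length (L ! j)}"

definition forest_weight :: "nat list list \<Rightarrow> nat \<times> nat \<Rightarrow> nat" where
  "forest_weight L x = L ! fst x ! snd x"

definition path_adj :: "nat \<times> nat \<Rightarrow> nat \<times> nat \<Rightarrow> bool" where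
  "path_adj x y \<longleftrightarrow> fst x = fst y \<and> (snd y = snd x + 1 \<or> snd x = snd y + 1)"

definition forest_csf_coeff :: "nat list list \<Rightarrow> (nat \<Rightarrow> nat) \<Rightarrow> nat" where
  "forest_csf_coeff L = weighted_csf_coeff (forest_vertices L) path_adj (forest_weight L)"

definition valid_forest :: "nat list list \<Rightarrow> bool" where
  "valid_forest L \<longleftrightarrow> (\<forall>p\<in>set L. p \<noteq> [] \<and> 0 \<notin> set p)"

definition forest_shape :: "nat list list \<Rightarrow> nat list" where
  "forest_shape L = sort_desc (map sum_list L)"

definition num_forest_edges :: "nat list list \<Rightarrow> nat" where
  "num_forest_edges L = card (forest_vertices L) - length L"

lemma path_edges_eq_path_adj: "path_edges lam = path_adj"
  unfolding path_edges_def path_adj_def by (intro ext) simp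

lemma mem_forest_vertices [simp]: "(j, i) \<in> forest_vertices L \<longleftrightarrow> j < length L \<and> i < length (L ! j)"
  unfolding forest_vertices_def by simp

lemma forest_vertices_Sigma: "forest_vertices L = Sigma {..<length L} (\<lambda>j. {..<length (L ! j)})"
  unfolding forest_vertices_def by auto

lemma finite_forest_vertices [simp]: "finite (forest_vertices L)"
  unfolding forest_vertices_Sigma by auto

lemma card_forest_vertices: "card (forest_vertices L) = sum_list (map length L)"
  unfolding forest_vertices_Sigma by (simp add: card_SigmaI sum_list_sum_nth atLeast0LessThan)

lemma sum_forest_weight: "sum (forest_weight L) (forest_vertices L) = sum_list (map sum_list L)"
proof -
  have "sum (forest_weight L) (forest_vertices L) = (\<Sum>(j, i)\<in>forest_vertices L. L ! j ! i)"
    unfolding forest_weight_def by (rule sum.cong) auto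
  also have "\<dots> = (\<Sum>j<length L. \<Sum>i<length (L ! j). L ! j ! i)"
    unfolding forest_vertices_Sigma by (simp add: sum.Sigma)
  also have "\<dots> = sum_list (map sum_list L)"
    by (simp add: sum_list_sum_nth atLeast0LessThan)
  finally show ?thesis .
qed

lemma valid_forest_weight_pos:
  assumes "valid_forest L" "x \<in> forest_vertices L"
  shows "0 < forest_weight L x"
proof -
  obtain j i where x: "x = (j, i)" "j < length L" "i < length (L ! j)" using assms(2) by (cases x) auto
  then have "L ! j \<in> set L" "L ! j ! i \<in> set (L ! j)" by simp_all
  then show ?thesis using assms(1) x unfolding valid_forest_def forest_weight_def by (cases "L ! j ! i") auto
qed

lemma forest_shape_in_partitions:
  assumes "valid_forest L"
  shows "forest_shape L \<in> partitions (sum_list (map sum_list L))"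
proof -
  have "0 \<notin> set (map sum_list L)"
    using assms unfolding valid_forest_def by (auto simp: sum_list_eq_0_iff) (metis neq0_conv list.set_sel(1))
  then show ?thesis unfolding forest_shape_def by (metis sort_desc_in_partitions)
qed

lemma forest_shape_length [simp]: "length (forest_shape L) = length L"
  by (simp add: forest_shape_def)

lemma num_forest_edges_pos:
  assumes "valid_forest L" "j < length L" "2 \<le> length (L ! j)"
  shows "1 \<le> num_forest_edges L"
proof -
  have lengths: "sum_list (map length L) = length L + sum_list (map (\<lambda>p. length p - 1) L)"
    using assms(1) unfolding valid_forest_def by (induction L) (auto simp: Suc_le_eq)
  have "length (L ! j) - 1 \<le> sum_list (map (\<lambda>p. length p - 1) L)"
    by (rule member_le_sum_list) (use assms(2) in auto)
  then show ?thesis using assms(3) unfolding num_forest_edges_def card_forest_vertices lengths by simp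
qed

text \<open>The two graphs obtained from the last edge of the \<open>j\<close>-th path: deleting it splits off the last
  vertex as a new path, contracting it merges the last two vertices.\<close>

definition cut_last_edge :: "nat list list \<Rightarrow> nat \<Rightarrow> nat list list" where
  "cut_last_edge L j = L[j := butlast (L ! j)] @ [[last (L ! j)]]"

definition contract_last_edge :: "nat list list \<Rightarrow> nat \<Rightarrow> nat list list" where
  "contract_last_edge L j = L[j := butlast (butlast (L ! j)) @ [last (butlast (L ! j)) + last (L ! j)]]"

lemma length_cut_last_edge [simp]: "length (cut_last_edge L j) = Suc (length L)"
  by (simp add: cut_last_edge_def)

lemma length_contract_last_edge [simp]: "length (contract_last_edge L j) = length L"
  by (simp add: contract_last_edge_def)

lemma mem_forest_vertices_cut_last_edge:
  assumes "j < length L"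
  shows "(a, b) \<in> forest_vertices (cut_last_edge L j) \<longleftrightarrow>
    (a, b) \<in> forest_vertices L \<and> (a, b) \<noteq> (j, length (L ! j) - 1) \<or> (a, b) = (length L, 0)"
  using assms by (auto simp: cut_last_edge_def nth_append nth_list_update less_Suc_eq)

lemma forest_weight_cut_last_edge:
  assumes "j < length L" "(a, b) \<in> forest_vertices L" "(a, b) \<noteq> (j, length (L ! j) - 1)"
  shows "forest_weight (cut_last_edge L j) (a, b) = forest_weight L (a, b)"
  using assms by (auto simp: cut_last_edge_def forest_weight_def nth_append nth_list_update nth_butlast)

lemma bij_betw_cut_last_edge:
  assumes "j < length L" "2 \<le> length (L ! j)"
  shows "bij_betw (\<lambda>x. if x = (j, length (L ! j) - 1) then (length L, 0) else x)
    (forest_vertices L) (forest_vertices (cut_last_edge L j))"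
    (is "bij_betw ?f _ _")
proof -
  let ?v = "(j, length (L ! j) - 1)"
  have v: "?v \<in> forest_vertices L" using assms by simp
  have "inj_on ?f (forest_vertices L)" unfolding inj_on_def by auto
  moreover have "?f ` forest_vertices L = forest_vertices (cut_last_edge L j)"
  proof (intro equalityI subsetI)
    fix y assume "y \<in> ?f ` forest_vertices L"
    then obtain x where "x \<in> forest_vertices L" "y = ?f x" by blast
    then show "y \<in> forest_vertices (cut_last_edge L j)"
      by (cases x) (auto simp: mem_forest_vertices_cut_last_edge[OF assms(1)] simp del: mem_forest_vertices)
  next
    fix y assume y: "y \<in> forest_vertices (cut_last_edge L j)"
    obtain a b where ab: "y = (a, b)" by fastforce
    show "y \<in> ?f ` forest_vertices L"
    proof (cases "y = (length L, 0)")
      case True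
      then show ?thesis using v by (auto simp: image_iff intro!: bexI[of _ ?v])
    next
      case False
      then have "y \<in> forest_vertices L" "y \<noteq> ?v"
        using y mem_forest_vertices_cut_last_edge[OF assms(1), of a b] ab by auto
      then show ?thesis by (intro image_eqI[of _ _ y]) auto
    qed
  qed
  ultimately show ?thesis unfolding bij_betw_def ..
qed

lemma forest_csf_coeff_cut_last_edge:
  assumes "j < length L" "2 \<le> length (L ! j)"
  shows "forest_csf_coeff (cut_last_edge L j) \<alpha> = weighted_csf_coeff (forest_vertices L)
    (delete_edge path_adj (j, length (L ! j) - 2) (j, length (L ! j) - 1)) (forest_weight L) \<alpha>"
proof -
  let ?v = "(j, length (L ! j) - 1)"
  define f where "f x = (if x = ?v then (length L, 0) else x)" for x
  have "path_adj (f x) (f y) = delete_edge path_adj (j, length (L ! j) - 2) ?v x y"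
    if "x \<in> forest_vertices L" "y \<in> forest_vertices L" for x y
  proof -
    obtain a b c d where xy: "x = (a, b)" "y = (c, d)" by fastforce
    show ?thesis using that assms unfolding xy f_def path_adj_def delete_edge_def
      by (cases "(a, b) = ?v"; cases "(c, d) = ?v") auto
  qed
  moreover have "forest_weight (cut_last_edge L j) (f x) = forest_weight L x" if "x \<in> forest_vertices L" for x
  proof (cases "x = ?v")
    case True
    moreover have "L ! j \<noteq> []" using assms(2) by auto
    ultimately show ?thesis using assms
      by (simp add: f_def forest_weight_def cut_last_edge_def nth_append last_conv_nth)
  next
    case False
    then show ?thesis using that forest_weight_cut_last_edge[OF assms(1)] by (cases x) (auto simp: f_def)
  qed
  ultimately show ?thesis
    using bij_betw_cut_last_edge[OF assms] unfolding forest_csf_coeff_def f_def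
    by (intro weighted_csf_coeff_iso[symmetric]) auto
qed

lemma forest_vertices_contract_last_edge:
  assumes "j < length L" "2 \<le> length (L ! j)"
  shows "forest_vertices (contract_last_edge L j) = forest_vertices L - {(j, length (L ! j) - 1)}"
proof (intro set_eqI)
  fix x :: "nat \<times> nat"
  obtain a b where "x = (a, b)" by fastforce
  then show "x \<in> forest_vertices (contract_last_edge L j) \<longleftrightarrow> x \<in> forest_vertices L - {(j, length (L ! j) - 1)}"
    using assms by (auto simp: contract_last_edge_def nth_list_update)
qed

lemma forest_csf_coeff_contract_last_edge:
  assumes "j < length L" "2 \<le> length (L ! j)"
  defines "u \<equiv> (j, length (L ! j) - 2)" and "v \<equiv> (j, length (L ! j) - 1)"
  shows "forest_csf_coeff (contract_last_edge L j) \<alpha> = weighted_csf_coeff (forest_vertices L - {v})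
    (contract_edge path_adj u v) ((forest_weight L)(u := forest_weight L u + forest_weight L v)) \<alpha>"
  unfolding forest_csf_coeff_def forest_vertices_contract_last_edge[OF assms(1,2), folded v_def]
proof (rule weighted_csf_coeff_cong)
  fix x y assume "x \<in> forest_vertices L - {v}" "y \<in> forest_vertices L - {v}"
  then show "path_adj x y = contract_edge path_adj u v x y"
    using assms(2) unfolding u_def v_def path_adj_def contract_edge_def by (cases x; cases y) auto
next
  fix x assume x: "x \<in> forest_vertices L - {v}"
  have "length (butlast (L ! j)) \<noteq> 0" using assms(2) by simp
  then have "butlast (L ! j) \<noteq> []" by (metis length_0_conv)
  then have "L ! j \<noteq> []" "butlast (L ! j) \<noteq> []" by auto
  then show "forest_weight (contract_last_edge L j) x = ((forest_weight L)(u := forest_weight L u + forest_weight L v)) x"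
    using x assms(1,2) unfolding u_def v_def
    by (cases x) (auto simp: forest_weight_def contract_last_edge_def nth_list_update nth_append nth_butlast last_conv_nth numeral_2_eq_2)
qed

lemma forest_csf_coeff_last_edge_recurrence:
  assumes "valid_forest L" "j < length L" "2 \<le> length (L ! j)"
  shows "forest_csf_coeff (cut_last_edge L j) \<alpha> =
    forest_csf_coeff L \<alpha> + forest_csf_coeff (contract_last_edge L j) \<alpha>"
proof -
  let ?u = "(j, length (L ! j) - 2)" and ?v = "(j, length (L ! j) - 1)"
  have "?u \<in> forest_vertices L" "?v \<in> forest_vertices L" "?u \<noteq> ?v" "path_adj ?u ?v"
    using assms(2,3) by (auto simp: path_adj_def)
  then show ?thesis
    unfolding forest_csf_coeff_cut_last_edge[OF assms(2,3)] forest_csf_coeff_contract_last_edge[OF assms(2,3)]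
    using weighted_csf_coeff_deletion_contraction[of "forest_vertices L" ?u ?v path_adj "forest_weight L"]
      valid_forest_weight_pos[OF assms(1)]
    by (simp add: forest_csf_coeff_def path_adj_def)
qed

lemma sum_list_butlast_last: "xs \<noteq> [] \<Longrightarrow> sum_list xs = sum_list (butlast xs) + (last xs :: 'a :: monoid_add)"
  using sum_list_append[of "butlast xs" "[last xs]"] by simp

lemma path_sums_contract_last_edge:
  assumes "j < length L" "2 \<le> length (L ! j)"
  shows "map sum_list (contract_last_edge L j) = map sum_list L"
proof -
  let ?p = "L ! j"
  have "length (butlast ?p) \<noteq> 0" using assms(2) by simp
  then have "butlast ?p \<noteq> []" "?p \<noteq> []" by (metis length_0_conv, auto)
  then have "sum_list (butlast (butlast ?p) @ [last (butlast ?p) + last ?p]) = sum_list ?p"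
    by (simp add: sum_list_butlast_last[of ?p] sum_list_butlast_last[of "butlast ?p"] add.assoc)
  then have "map sum_list (contract_last_edge L j) = (map sum_list L)[j := map sum_list L ! j]"
    using assms(1) unfolding contract_last_edge_def map_update by simp
  then show ?thesis by simp
qed

lemma total_weight_cut_last_edge:
  assumes "j < length L" "2 \<le> length (L ! j)"
  shows "sum_list (map sum_list (cut_last_edge L j)) = sum_list (map sum_list L)"
proof -
  let ?p = "L ! j"
  have "?p \<noteq> []" using assms(2) by auto
  have "sum_list ?p \<le> sum_list (map sum_list L)"
    using elem_le_sum_list[of j "map sum_list L"] assms(1) by simp
  then show ?thesis
    using assms(1) sum_list_butlast_last[OF \<open>?p \<noteq> []\<close>]
    by (simp add: cut_last_edge_def map_update sum_list_update)
qed

lemma card_forest_vertices_cut_last_edge: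
  assumes "j < length L" "2 \<le> length (L ! j)"
  shows "card (forest_vertices (cut_last_edge L j)) = card (forest_vertices L)"
proof -
  have "length (L ! j) \<le> sum_list (map length L)"
    using elem_le_sum_list[of j "map length L"] assms(1) by simp
  then show ?thesis
    using assms by (simp add: card_forest_vertices cut_last_edge_def map_update sum_list_update)
qed

lemma num_forest_edges_cut_last_edge:
  assumes "j < length L" "2 \<le> length (L ! j)"
  shows "num_forest_edges (cut_last_edge L j) = num_forest_edges L - 1"
  using card_forest_vertices_cut_last_edge[OF assms] by (simp add: num_forest_edges_def)

lemma num_forest_edges_contract_last_edge:
  assumes "j < length L" "2 \<le> length (L ! j)"
  shows "num_forest_edges (contract_last_edge L j) = num_forest_edges L - 1"
proof -
  have "(j, length (L ! j) - 1) \<in> forest_vertices L" using assms by simp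
  then show ?thesis
    unfolding num_forest_edges_def forest_vertices_contract_last_edge[OF assms] by simp
qed

lemma valid_forest_cut_last_edge:
  assumes "valid_forest L" "j < length L" "2 \<le> length (L ! j)"
  shows "valid_forest (cut_last_edge L j)"
proof -
  have p: "L ! j \<noteq> []" "0 \<notin> set (L ! j)" using assms(1,2) unfolding valid_forest_def by auto
  have "length (butlast (L ! j)) \<noteq> 0" using assms(3) by simp
  then have "butlast (L ! j) \<noteq> []" by (metis length_0_conv)
  moreover have "0 \<notin> set (butlast (L ! j))" using p(2) by (meson in_set_butlastD)
  moreover have "last (L ! j) \<noteq> 0"
  proof
    assume "last (L ! j) = 0"
    with last_in_set[OF p(1)] p(2) show False by simp
  qed
  moreover have "set (cut_last_edge L j) \<subseteq> insert (butlast (L ! j)) (set L) \<union> {[last (L ! j)]}"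
    unfolding cut_last_edge_def using set_update_subset_insert by fastforce
  ultimately show ?thesis using assms(1) unfolding valid_forest_def by fastforce
qed

lemma valid_forest_contract_last_edge:
  assumes "valid_forest L" "j < length L" "2 \<le> length (L ! j)"
  shows "valid_forest (contract_last_edge L j)"
proof -
  let ?q = "butlast (butlast (L ! j)) @ [last (butlast (L ! j)) + last (L ! j)]"
  have p: "L ! j \<noteq> []" "0 \<notin> set (L ! j)" using assms(1,2) unfolding valid_forest_def by auto
  have "last (L ! j) \<noteq> 0"
  proof
    assume "last (L ! j) = 0"
    with last_in_set[OF p(1)] p(2) show False by simp
  qed
  moreover have "0 \<notin> set (butlast (butlast (L ! j)))" using p(2) by (meson in_set_butlastD)
  ultimately have "?q \<noteq> [] \<and> 0 \<notin> set ?q" by auto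
  moreover have "set (contract_last_edge L j) \<subseteq> insert ?q (set L)"
    unfolding contract_last_edge_def by (rule set_update_subset_insert)
  ultimately show ?thesis using assms(1) unfolding valid_forest_def by blast
qed

lemma forest_csf_coeff_singleton_paths:
  assumes "\<And>p. p \<in> set L \<Longrightarrow> length p = 1"
  shows "of_nat (forest_csf_coeff L \<alpha>) = power_sum_coeff (map sum_list L) \<alpha>"
  unfolding forest_csf_coeff_def
proof (rule power_sum_coeff_edgeless)
  have single: "length (L ! j) = 1" if "j < length L" for j using assms that by simp
  then have "forest_vertices L = (\<lambda>j. (j, 0)) ` {..<length L}" by (force simp: forest_vertices_def)
  then show "bij_betw (\<lambda>j. (j, 0)) {..<length (map sum_list L)} (forest_vertices L)"
    by (simp add: bij_betw_def inj_on_def)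
  show "\<not> path_adj x y" if "x \<in> forest_vertices L" "y \<in> forest_vertices L" for x y
    using that single by (cases x; cases y) (auto simp: path_adj_def)
  show "forest_weight L (j, 0) = map sum_list L ! j" if "j < length (map sum_list L)" for j
    using single[of j] that by (cases "L ! j") (auto simp: forest_weight_def)
qed

lemma valid_forest_without_edges:
  assumes "valid_forest L" "\<not> (\<exists>j<length L. 2 \<le> length (L ! j))"
  shows "\<And>p. p \<in> set L \<Longrightarrow> length p = 1" and "card (forest_vertices L) = length L"
    and "num_forest_edges L = 0"
proof -
  show single: "length p = 1" if p: "p \<in> set L" for p
  proof -
    obtain j where "j < length L" "p = L ! j" using p by (auto simp: in_set_conv_nth)
    then have "length p < 2" using assms(2) by auto
    moreover have "p \<noteq> []" using assms(1) p unfolding valid_forest_def by auto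
    ultimately show ?thesis by (cases p) auto
  qed
  have "sum_list (map length L) = length L"
    using single by (induction L) auto
  then show "card (forest_vertices L) = length L" by (simp add: card_forest_vertices)
  then show "num_forest_edges L = 0" by (simp add: num_forest_edges_def)
qed

lemma last_edge_forest_invariants:
  assumes "valid_forest L" "j < length L" "2 \<le> length (L ! j)"
  shows "1 \<le> num_forest_edges L"
    and "valid_forest (cut_last_edge L j)" "num_forest_edges (cut_last_edge L j) = num_forest_edges L - 1"
      "sum_list (map sum_list (cut_last_edge L j)) = sum_list (map sum_list L)"
    and "valid_forest (contract_last_edge L j)"
      "num_forest_edges (contract_last_edge L j) = num_forest_edges L - 1"
      "forest_shape (contract_last_edge L j) = forest_shape L"
  using num_forest_edges_pos[OF assms] valid_forest_cut_last_edge[OF assms]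
    num_forest_edges_cut_last_edge[OF assms(2,3)] total_weight_cut_last_edge[OF assms(2,3)]
    valid_forest_contract_last_edge[OF assms] num_forest_edges_contract_last_edge[OF assms(2,3)]
    path_sums_contract_last_edge[OF assms(2,3)]
  by (simp_all add: forest_shape_def)

lemma forest_csf_coeff_no_edges:
  assumes "valid_forest L" "\<not> (\<exists>j<length L. 2 \<le> length (L ! j))"
  shows "of_nat (forest_csf_coeff L \<alpha>) = power_sum_coeff (forest_shape L) \<alpha>"
proof -
  have "of_nat (forest_csf_coeff L \<alpha>) = power_sum_coeff (map sum_list L) \<alpha>"
    by (rule forest_csf_coeff_singleton_paths) (rule valid_forest_without_edges(1)[OF assms])
  moreover have "power_sum_coeff (forest_shape L) = power_sum_coeff (map sum_list L)"
    unfolding forest_shape_def by (rule power_sum_coeff_mset_eq) simp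
  ultimately show ?thesis by simp
qed

text \<open>Deleting and contracting the last edge of a path removes one edge each; the cut forest has one
  more path and the contracted forest the same shape, which yields the triangularity by induction.\<close>

theorem forest_csf_coeff_triangular:
  assumes "valid_forest L"
  shows "spanned_by power_sum_coeff {\<mu> \<in> partitions (sum_list (map sum_list L)). length L < length \<mu>}
    (\<lambda>\<alpha>. of_nat (forest_csf_coeff L \<alpha>) - (- 1) ^ num_forest_edges L * power_sum_coeff (forest_shape L) \<alpha>)"
  using assms
proof (induction "num_forest_edges L" arbitrary: L rule: less_induct)
  case less
  let ?S = "{\<mu> \<in> partitions (sum_list (map sum_list L)). length L < length \<mu>}"
  show ?case
  proof (cases "\<exists>j<length L. 2 \<le> length (L ! j)")
    case False
    then show ?thesis using valid_forest_without_edges(3)[OF less.prems False]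
      by (simp add: forest_csf_coeff_no_edges[OF less.prems False] spanned_by_zero)
  next
    case True
    then obtain j where j: "j < length L" "2 \<le> length (L ! j)" by blast
    let ?L1 = "cut_last_edge L j" and ?L2 = "contract_last_edge L j" and ?e = "num_forest_edges L"
    note invariants = last_edge_forest_invariants[OF less.prems j]
    have "spanned_by power_sum_coeff {\<mu> \<in> partitions (sum_list (map sum_list L)). Suc (length L) < length \<mu>}
        (\<lambda>\<alpha>. of_nat (forest_csf_coeff ?L1 \<alpha>) - (- 1) ^ (?e - 1) * power_sum_coeff (forest_shape ?L1) \<alpha>)"
      using less.hyps[of ?L1] invariants by simp
    then have "spanned_by power_sum_coeff ?S
        (\<lambda>\<alpha>. of_nat (forest_csf_coeff ?L1 \<alpha>) - (- 1) ^ (?e - 1) * power_sum_coeff (forest_shape ?L1) \<alpha>)"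
      by (rule spanned_by_mono) (auto simp: finite_partitions)
    moreover have "forest_shape ?L1 \<in> ?S" using forest_shape_in_partitions[OF invariants(2)] invariants(4) by simp
    ultimately have cut: "spanned_by power_sum_coeff ?S (\<lambda>\<alpha>. of_nat (forest_csf_coeff ?L1 \<alpha>))"
      by (rule spanned_by_cancel_basis) (simp add: finite_partitions)
    have contracted: "spanned_by power_sum_coeff ?S
        (\<lambda>\<alpha>. of_nat (forest_csf_coeff ?L2 \<alpha>) - (- 1) ^ (?e - 1) * power_sum_coeff (forest_shape L) \<alpha>)"
      using less.hyps[of ?L2] invariants path_sums_contract_last_edge[OF j] by simp
    have "(- 1 :: rat) ^ ?e = - ((- 1) ^ (?e - 1))"
      using invariants(1) by (cases ?e) simp_all
    then have "(\<lambda>\<alpha>. of_nat (forest_csf_coeff L \<alpha>) - (- 1) ^ ?e * power_sum_coeff (forest_shape L) \<alpha>) =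
        (\<lambda>\<alpha>. of_nat (forest_csf_coeff ?L1 \<alpha>) -
          (of_nat (forest_csf_coeff ?L2 \<alpha>) - (- 1) ^ (?e - 1) * power_sum_coeff (forest_shape L) \<alpha>))"
      using forest_csf_coeff_last_edge_recurrence[OF less.prems j] by (simp add: fun_eq_iff)
    then show ?thesis using spanned_by_diff[OF cut contracted] by simp
  qed
qed

section \<open>Path graphs and the tree coefficients\<close>

definition unit_forest :: "nat list \<Rightarrow> nat list list" where
  "unit_forest lam = map (\<lambda>m. replicate m 1) lam"

definition path_csf_coeff :: "nat list \<Rightarrow> (nat \<Rightarrow> nat) \<Rightarrow> rat" where
  "path_csf_coeff lam \<alpha> = of_nat (csf_coeff (path_vertices lam) (path_edges lam) \<alpha>)"

lemma forest_vertices_unit_forest: "forest_vertices (unit_forest lam) = path_vertices lam"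
  unfolding forest_vertices_def path_vertices_def unit_forest_def by auto

lemma path_csf_coeff_eq_forest: "path_csf_coeff lam \<alpha> = of_nat (forest_csf_coeff (unit_forest lam) \<alpha>)"
  unfolding path_csf_coeff_def forest_csf_coeff_def csf_coeff_eq_weighted
    forest_vertices_unit_forest path_edges_eq_path_adj
  by (rule arg_cong[where f = of_nat], rule weighted_csf_coeff_cong)
    (auto simp: path_vertices_def forest_weight_def unit_forest_def)

lemma unit_forest_partition:
  assumes "lam \<in> partitions n"
  shows "valid_forest (unit_forest lam)" "length (unit_forest lam) = length lam"
    "map sum_list (unit_forest lam) = lam" "forest_shape (unit_forest lam) = lam"
    "num_forest_edges (unit_forest lam) = n - length lam"
proof -
  show lam: "map sum_list (unit_forest lam) = lam"
    by (simp add: unit_forest_def comp_def sum_list_replicate)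
  show "valid_forest (unit_forest lam)"
    using assms unfolding valid_forest_def unit_forest_def partitions_def by (fastforce intro: gr0I)
  show "length (unit_forest lam) = length lam" by (simp add: unit_forest_def)
  show "forest_shape (unit_forest lam) = lam"
    using assms sort_desc_eq_iff_mset[of lam] unfolding forest_shape_def lam partitions_def by simp
  have "card (forest_vertices (unit_forest lam)) = n"
    using assms unfolding card_forest_vertices partitions_def unit_forest_def by (simp add: comp_def)
  then show "num_forest_edges (unit_forest lam) = n - length lam"
    by (simp add: num_forest_edges_def unit_forest_def)
qed

lemma path_csf_coeff_triangular:
  assumes "lam \<in> partitions n"
  shows "spanned_by power_sum_coeff {\<mu> \<in> partitions n. length lam < length \<mu>}
    (\<lambda>\<alpha>. path_csf_coeff lam \<alpha> - (- 1) ^ (n - length lam) * power_sum_coeff lam \<alpha>)"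
proof -
  have "sum_list lam = n" using assms by (simp add: partitions_def)
  then show ?thesis
    using forest_csf_coeff_triangular[OF unit_forest_partition(1)[OF assms]] unit_forest_partition[OF assms]
    unfolding path_csf_coeff_eq_forest by simp
qed

theorem power_sum_spanned_by_path_csf:
  assumes "\<nu> \<in> partitions n"
  shows "spanned_by path_csf_coeff (partitions n) (power_sum_coeff \<nu>)"
  using assms
proof (induction "n - length \<nu>" arbitrary: \<nu> rule: less_induct)
  case less
  let ?S = "{\<mu> \<in> partitions n. length \<nu> < length \<mu>}"
  let ?s = "(- 1 :: rat) ^ (n - length \<nu>)"
  have longer: "spanned_by path_csf_coeff (partitions n) (power_sum_coeff \<mu>)" if "\<mu> \<in> ?S" for \<mu>
    using that partitions_length_le[of \<mu> n] by (intro less.hyps) auto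
  have remainder: "spanned_by path_csf_coeff (partitions n)
      (\<lambda>\<alpha>. path_csf_coeff \<nu> \<alpha> - ?s * power_sum_coeff \<nu> \<alpha>)"
    by (rule spanned_by_trans[OF path_csf_coeff_triangular[OF less.prems] longer]) (simp_all add: finite_partitions)
  have "spanned_by path_csf_coeff (partitions n)
      (\<lambda>\<alpha>. ?s * (path_csf_coeff \<nu> \<alpha> - (path_csf_coeff \<nu> \<alpha> - ?s * power_sum_coeff \<nu> \<alpha>)))"
    by (rule spanned_by_scale[OF spanned_by_diff[OF spanned_by_basis[OF finite_partitions less.prems] remainder]])
  moreover have "?s * (a - (a - ?s * b)) = b" for a b
    by (simp flip: mult.assoc power_mult_distrib)
  ultimately show ?case by simp
qed

lemma triangular_kernel_trivial:
  fixes M :: "'i \<Rightarrow> 'i \<Rightarrow> 'a :: idom" and r :: "'i \<Rightarrow> nat"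
  assumes "finite S"
    and diagonal: "\<And>i. i \<in> S \<Longrightarrow> M i i \<noteq> 0"
    and triangular: "\<And>i k. i \<in> S \<Longrightarrow> k \<in> S \<Longrightarrow> M i k \<noteq> 0 \<Longrightarrow> i = k \<or> r k < r i"
    and kernel: "\<And>k. k \<in> S \<Longrightarrow> (\<Sum>i\<in>S. d i * M i k) = 0"
    and "i \<in> S"
  shows "d i = 0"
proof (rule ccontr)
  let ?Z = "{i \<in> S. d i \<noteq> 0}"
  assume "d i \<noteq> 0"
  then have "?Z \<noteq> {}" using \<open>i \<in> S\<close> by blast
  moreover have "finite ?Z" using \<open>finite S\<close> by simp
  ultimately have "Max (r ` ?Z) \<in> r ` ?Z" by simp
  then obtain k where k: "Max (r ` ?Z) = r k" "k \<in> ?Z" by (rule imageE)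
  have top: "r i \<le> r k" if "i \<in> ?Z" for i
    using that \<open>finite ?Z\<close> unfolding k(1)[symmetric] by simp
  have "d i * M i k = 0" if i: "i \<in> S - {k}" for i
  proof (cases "d i = 0")
    case False
    then have "\<not> r k < r i" using i top[of i] by simp
    then have "M i k = 0" using triangular[of i k] i k(2) by auto
    then show ?thesis by simp
  qed simp
  then have "(\<Sum>i\<in>S - {k}. d i * M i k) = 0" by (intro sum.neutral) blast
  moreover have "(\<Sum>i\<in>S. d i * M i k) = d k * M k k + (\<Sum>i\<in>S - {k}. d i * M i k)"
    using k(2) \<open>finite S\<close> by (intro sum.remove) auto
  ultimately show False using kernel[of k] diagonal[of k] k(2) by simp
qed

lemma mset_reindex_bij:
  assumes "bij_betw \<pi> {..<length xs} {..<length xs}"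
  shows "mset (map (\<lambda>j. xs ! \<pi> j) [0..<length xs]) = mset xs"
proof -
  have "mset (map (\<lambda>j. xs ! \<pi> j) [0..<length xs]) = image_mset (nth xs) (image_mset \<pi> (mset_set {..<length xs}))"
    by (simp add: atLeast0LessThan image_mset.compositionality comp_def)
  also have "image_mset \<pi> (mset_set {..<length xs}) = mset_set {..<length xs}"
    using assms by (simp add: bij_betw_def image_mset_mset_set)
  also have "image_mset (nth xs) (mset_set {..<length xs}) = mset (map (\<lambda>i. xs ! i) [0..<length xs])"
    by (simp add: mset_set_upto_eq_mset_upto)
  finally show ?thesis by (simp only: map_nth)
qed

lemma bij_betw_shift_onto_interval:
  fixes c :: "nat \<Rightarrow> nat"
  assumes "inj_on c {..<l}" "c ` {..<l} = {1..l}"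
  shows "bij_betw (\<lambda>j. c j - 1) {..<l} {..<l}"
proof -
  have pos: "1 \<le> c j" if "j < l" for j using assms(2) that by auto
  have "inj_on (\<lambda>j. c j - 1) {..<l}"
  proof (rule inj_onI)
    fix x y assume xy: "x \<in> {..<l}" "y \<in> {..<l}" "c x - 1 = c y - 1"
    moreover have "1 \<le> c x" "1 \<le> c y" using pos xy by simp_all
    ultimately have "c x = c y" by simp
    then show "x = y" using assms(1) xy by (simp add: inj_on_eq_iff)
  qed
  moreover have "(\<lambda>j. c j - 1) ` {..<l} = (\<lambda>i. i - 1) ` {1..l}"
    unfolding assms(2)[symmetric] by (simp add: image_image)
  moreover have "(\<lambda>i. i - 1) ` {1..l} = {..<l}"
  proof (intro equalityI subsetI)
    fix k assume "k \<in> {..<l}"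
    then have "Suc k \<in> {1..l}" "k = Suc k - 1" by auto
    then show "k \<in> (\<lambda>i. i - 1) ` {1..l}" by blast
  qed auto
  ultimately show ?thesis by (simp add: bij_betw_def)
qed

text \<open>The exponent vector of the monomial \<open>x\<^sub>1^\<mu>\<^sub>1 x\<^sub>2^\<mu>\<^sub>2 \<cdots>\<close>; colours are positive.\<close>

definition partition_monomial :: "nat list \<Rightarrow> nat \<Rightarrow> nat" where
  "partition_monomial \<mu> i = (if 1 \<le> i \<and> i \<le> length \<mu> then \<mu> ! (i - 1) else 0)"

lemma power_sum_coeff_partition_monomial_self:
  assumes "\<mu> \<in> partitions n"
  shows "power_sum_coeff \<mu> (partition_monomial \<mu>) \<noteq> 0"
proof -
  let ?W = "weighted_colourings {..<length \<mu>} (\<lambda>_ _. False) (nth \<mu>) (partition_monomial \<mu>)"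
  have "restrict Suc {..<length \<mu>} \<in> ?W"
  proof -
    have "{j \<in> {..<length \<mu>}. restrict Suc {..<length \<mu>} j = i} = (if 1 \<le> i \<and> i \<le> length \<mu> then {i - 1} else {})" for i
      by auto
    then show ?thesis
      by (auto simp: weighted_colourings_def proper_colouring_def colour_class_weight_def partition_monomial_def)
  qed
  moreover have "finite ?W"
    using assms by (intro finite_weighted_colourings) (auto intro: partitions_nth_pos)
  ultimately show ?thesis unfolding power_sum_coeff_def weighted_csf_coeff_def by auto
qed

lemma power_sum_coeff_partition_monomial_nonzero:
  assumes \<mu>: "\<mu> \<in> partitions n" and \<nu>: "\<nu> \<in> partitions m"
    and nonzero: "power_sum_coeff \<mu> (partition_monomial \<nu>) \<noteq> 0"
  shows "\<mu> = \<nu> \<or> length \<nu> < length \<mu>"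
proof -
  let ?l = "length \<mu>"
  have "weighted_colourings {..<?l} (\<lambda>_ _. False) (nth \<mu>) (partition_monomial \<nu>) \<noteq> {}"
    using nonzero by (auto simp: power_sum_coeff_def weighted_csf_coeff_def)
  then obtain c where "c \<in> weighted_colourings {..<?l} (\<lambda>_ _. False) (nth \<mu>) (partition_monomial \<nu>)"
    by blast
  then have weights: "(\<Sum>j\<in>{j \<in> {..<?l}. c j = i}. \<mu> ! j) = partition_monomial \<nu> i" for i
    unfolding weighted_colourings_def colour_class_weight_def by (auto dest: fun_cong[of _ _ i])
  have used: "{1..length \<nu>} \<subseteq> c ` {..<?l}"
  proof
    fix i assume i: "i \<in> {1..length \<nu>}"
    then have "0 < partition_monomial \<nu> i"
      using partitions_nth_pos[OF \<nu>, of "i - 1"] by (auto simp: partition_monomial_def)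
    then have "{j \<in> {..<?l}. c j = i} \<noteq> {}" using weights[of i] by (metis less_irrefl sum.empty)
    then show "i \<in> c ` {..<?l}" by blast
  qed
  have image_le: "card (c ` {..<?l}) \<le> ?l" using card_image_le[of "{..<?l}" c] by simp
  have "length \<nu> \<le> ?l" using card_mono[OF _ used] image_le by simp
  moreover have "\<mu> = \<nu>" if same_length: "?l = length \<nu>"
  proof -
    have image: "c ` {..<?l} = {1..?l}" and inj: "inj_on c {..<?l}"
      using card_subset_eq[OF _ used] card_mono[OF _ used] image_le same_length
      by (auto intro: eq_card_imp_inj_on)
    have nth: "\<mu> ! j = \<nu> ! (c j - 1)" if j: "j < ?l" for j
    proof -
      have "{j' \<in> {..<?l}. c j' = c j} = {j}" using inj j by (auto dest: inj_onD)
      moreover have "c j \<in> {1..?l}" using image j by blast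
      ultimately show ?thesis using weights[of "c j"] same_length by (simp add: partition_monomial_def)
    qed
    have bij: "bij_betw (\<lambda>j. c j - 1) {..<length \<nu>} {..<length \<nu>}"
      using bij_betw_shift_onto_interval[OF inj image] same_length by simp
    have \<mu>_eq: "\<mu> = map (\<lambda>j. \<nu> ! (c j - 1)) [0..<length \<nu>]"
      using nth same_length by (intro nth_equalityI) auto
    have "mset \<mu> = mset \<nu>" by (subst \<mu>_eq) (rule mset_reindex_bij[OF bij])
    then show ?thesis using partitions_mset_eq[OF \<mu> \<nu>] by simp
  qed
  ultimately show ?thesis by fastforce
qed

lemma power_sum_coeff_independent:
  assumes "\<And>\<alpha>. (\<Sum>\<mu>\<in>partitions n. e \<mu> * power_sum_coeff \<mu> \<alpha>) = 0" "\<mu> \<in> partitions n"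
  shows "e \<mu> = 0"
proof (rule triangular_kernel_trivial[where M = "\<lambda>\<mu> \<nu>. power_sum_coeff \<mu> (partition_monomial \<nu>)" and r = length])
  show "\<And>\<mu> \<nu>. \<mu> \<in> partitions n \<Longrightarrow> \<nu> \<in> partitions n \<Longrightarrow> power_sum_coeff \<mu> (partition_monomial \<nu>) \<noteq> 0 \<Longrightarrow>
      \<mu> = \<nu> \<or> length \<nu> < length \<mu>"
    by (rule power_sum_coeff_partition_monomial_nonzero)
qed (use assms finite_partitions power_sum_coeff_partition_monomial_self in auto)

lemma path_csf_coeff_power_sum_expansion:
  assumes "lam \<in> partitions n"
  shows "\<exists>T. (\<forall>\<alpha>. path_csf_coeff lam \<alpha> = (\<Sum>\<mu>\<in>partitions n. T \<mu> * power_sum_coeff \<mu> \<alpha>)) \<and>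
    T lam \<noteq> 0 \<and> (\<forall>\<mu>. T \<mu> \<noteq> 0 \<longrightarrow> \<mu> = lam \<or> length lam < length \<mu>)"
proof -
  let ?s = "(- 1 :: rat) ^ (n - length lam)"
  obtain c where c: "\<And>\<mu>. \<mu> \<notin> {\<mu> \<in> partitions n. length lam < length \<mu>} \<Longrightarrow> c \<mu> = 0"
    and expansion: "\<And>\<alpha>. path_csf_coeff lam \<alpha> - ?s * power_sum_coeff lam \<alpha> =
      (\<Sum>\<mu>\<in>partitions n. c \<mu> * power_sum_coeff \<mu> \<alpha>)"
    using spanned_by_obtain_coeffs[OF path_csf_coeff_triangular[OF assms]] finite_partitions by blast
  define T where "T \<mu> = (if \<mu> = lam then ?s else c \<mu>)" for \<mu>
  have "(\<Sum>\<mu>\<in>partitions n. T \<mu> * power_sum_coeff \<mu> \<alpha>) =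
      ?s * power_sum_coeff lam \<alpha> + (\<Sum>\<mu>\<in>partitions n. c \<mu> * power_sum_coeff \<mu> \<alpha>)" for \<alpha>
    using assms c[of lam] finite_partitions
    by (simp add: T_def sum.remove[of "partitions n" lam])
  moreover have "path_csf_coeff lam \<alpha> = ?s * power_sum_coeff lam \<alpha> +
      (\<Sum>\<mu>\<in>partitions n. c \<mu> * power_sum_coeff \<mu> \<alpha>)" for \<alpha>
    using expansion[of \<alpha>] by (simp add: algebra_simps)
  moreover have "\<mu> = lam \<or> length lam < length \<mu>" if "T \<mu> \<noteq> 0" for \<mu>
    using that c[of \<mu>] by (cases "\<mu> = lam") (auto simp: T_def)
  ultimately show ?thesis by (intro exI[of _ T]) (auto simp: T_def)
qed

lemma path_csf_coeff_independent:
  assumes "\<And>\<alpha>. (\<Sum>lam\<in>partitions n. d lam * path_csf_coeff lam \<alpha>) = 0" "lam \<in> partitions n"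
  shows "d lam = 0"
proof -
  let ?P = "partitions n"
  have "\<forall>lam\<in>?P. \<exists>t. (\<forall>\<alpha>. path_csf_coeff lam \<alpha> = (\<Sum>\<mu>\<in>?P. t \<mu> * power_sum_coeff \<mu> \<alpha>)) \<and>
      t lam \<noteq> 0 \<and> (\<forall>\<mu>. t \<mu> \<noteq> 0 \<longrightarrow> \<mu> = lam \<or> length lam < length \<mu>)"
    by (intro ballI path_csf_coeff_power_sum_expansion)
  then have "\<exists>T. \<forall>lam\<in>?P. (\<forall>\<alpha>. path_csf_coeff lam \<alpha> = (\<Sum>\<mu>\<in>?P. T lam \<mu> * power_sum_coeff \<mu> \<alpha>)) \<and>
      T lam lam \<noteq> 0 \<and> (\<forall>\<mu>. T lam \<mu> \<noteq> 0 \<longrightarrow> \<mu> = lam \<or> length lam < length \<mu>)"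
    by (rule bchoice)
  then obtain T where T: "\<And>lam \<alpha>. lam \<in> ?P \<Longrightarrow> path_csf_coeff lam \<alpha> = (\<Sum>\<mu>\<in>?P. T lam \<mu> * power_sum_coeff \<mu> \<alpha>)"
    "\<And>lam. lam \<in> ?P \<Longrightarrow> T lam lam \<noteq> 0"
    "\<And>lam \<mu>. lam \<in> ?P \<Longrightarrow> T lam \<mu> \<noteq> 0 \<Longrightarrow> \<mu> = lam \<or> length lam < length \<mu>"
    by auto
  have "(\<Sum>\<mu>\<in>?P. (\<Sum>lam\<in>?P. d lam * T lam \<mu>) * power_sum_coeff \<mu> \<alpha>) = 0" for \<alpha>
  proof -
    have "(\<Sum>\<mu>\<in>?P. (\<Sum>lam\<in>?P. d lam * T lam \<mu>) * power_sum_coeff \<mu> \<alpha>) =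
        (\<Sum>\<mu>\<in>?P. \<Sum>lam\<in>?P. d lam * (T lam \<mu> * power_sum_coeff \<mu> \<alpha>))"
      by (simp add: sum_distrib_right mult.assoc)
    also have "\<dots> = (\<Sum>lam\<in>?P. d lam * (\<Sum>\<mu>\<in>?P. T lam \<mu> * power_sum_coeff \<mu> \<alpha>))"
      by (subst sum.swap) (simp add: sum_distrib_left)
    also have "\<dots> = (\<Sum>lam\<in>?P. d lam * path_csf_coeff lam \<alpha>)"
      using T(1) by (intro sum.cong) auto
    finally show ?thesis using assms(1) by simp
  qed
  then have kernel: "(\<Sum>lam\<in>?P. d lam * T lam \<mu>) = 0" if "\<mu> \<in> ?P" for \<mu>
    using that by (rule power_sum_coeff_independent)
  show ?thesis
  proof (rule triangular_kernel_trivial[where M = T and r = "\<lambda>lam. n - length lam"])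
    show "lam = \<mu> \<or> n - length \<mu> < n - length lam"
      if "lam \<in> ?P" "\<mu> \<in> ?P" "T lam \<mu> \<noteq> 0" for lam \<mu>
      using T(3)[OF that(1,3)] partitions_length_le[OF that(2)] by auto
  qed (use finite_partitions T(2) kernel assms(2) in auto)
qed

lemma csf_spanned_by_path_csf:
  assumes "simple_graph V E"
  shows "spanned_by path_csf_coeff (partitions (card V)) (\<lambda>\<alpha>. of_nat (csf_coeff V E \<alpha>))"
proof -
  have "finite V" "\<And>x. x \<in> V \<Longrightarrow> \<not> E x x" using assms by (auto simp: simple_graph_def)
  then have "spanned_by power_sum_coeff (partitions (card V)) (\<lambda>\<alpha>. of_nat (csf_coeff V E \<alpha>))"
    using weighted_csf_spanned_by_power_sums[of V E "\<lambda>_. 1"] by (simp add: csf_coeff_eq_weighted)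
  then show ?thesis
    by (rule spanned_by_trans) (simp_all add: power_sum_spanned_by_path_csf finite_partitions)
qed

lemma tree_coeffs_eqI:
  assumes "\<And>lam. lam \<notin> partitions (card V) \<Longrightarrow> a lam = 0"
    and "\<And>\<alpha>. of_nat (csf_coeff V E \<alpha>) = (\<Sum>lam\<in>partitions (card V). a lam * path_csf_coeff lam \<alpha>)"
  shows "tree_coeffs V E = a"
  unfolding tree_coeffs_def
proof (rule the_equality)
  let ?P = "partitions (card V)"
  show "(\<forall>lam. lam \<notin> ?P \<longrightarrow> a lam = 0) \<and> (\<forall>\<alpha>. of_nat (csf_coeff V E \<alpha>) =
      (\<Sum>lam\<in>?P. a lam * of_nat (csf_coeff (path_vertices lam) (path_edges lam) \<alpha>)))"
    using assms by (simp add: path_csf_coeff_def)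
  fix b :: "nat list \<Rightarrow> rat" assume b: "(\<forall>lam. lam \<notin> ?P \<longrightarrow> b lam = 0) \<and> (\<forall>\<alpha>. of_nat (csf_coeff V E \<alpha>) =
      (\<Sum>lam\<in>?P. b lam * of_nat (csf_coeff (path_vertices lam) (path_edges lam) \<alpha>)))"
  show "b = a"
  proof
    fix lam
    have "(\<Sum>lam\<in>?P. (b lam - a lam) * path_csf_coeff lam \<alpha>) = 0" for \<alpha>
      using b assms(2)[of \<alpha>] by (simp add: path_csf_coeff_def left_diff_distrib sum_subtractf)
    then have "lam \<in> ?P \<Longrightarrow> b lam - a lam = 0" by (rule path_csf_coeff_independent)
    then show "b lam = a lam" using b assms(1) by (cases "lam \<in> ?P") auto
  qed
qed

section \<open>Counting colourings and the chromatic polynomial\<close>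

definition num_colourings :: "'v set \<Rightarrow> ('v \<Rightarrow> 'v \<Rightarrow> bool) \<Rightarrow> nat \<Rightarrow> nat" where
  "num_colourings V E q = card {\<kappa>. \<kappa> \<in> V \<rightarrow>\<^sub>E {1..q} \<and> proper_colouring V E \<kappa>}"

definition bounded_exponents :: "nat \<Rightarrow> nat \<Rightarrow> (nat \<Rightarrow> nat) set" where
  "bounded_exponents q N = {\<alpha>. (\<forall>i. \<alpha> i \<le> N) \<and> (\<forall>i. i \<notin> {1..q} \<longrightarrow> \<alpha> i = 0)}"

lemma finite_bounded_exponents: "finite (bounded_exponents q N)"
proof -
  have "bounded_exponents q N \<subseteq> (\<lambda>f i. if i \<le> q then f i else 0) ` ({..q} \<rightarrow>\<^sub>E {..N})"
  proof
    fix \<alpha> assume \<alpha>: "\<alpha> \<in> bounded_exponents q N"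
    then have "\<alpha> = (\<lambda>i. if i \<le> q then restrict \<alpha> {..q} i else 0)"
      by (auto simp: bounded_exponents_def fun_eq_iff)
    moreover have "restrict \<alpha> {..q} \<in> {..q} \<rightarrow>\<^sub>E {..N}" using \<alpha> by (simp add: bounded_exponents_def)
    ultimately show "\<alpha> \<in> (\<lambda>f i. if i \<le> q then f i else 0) ` ({..q} \<rightarrow>\<^sub>E {..N})" by blast
  qed
  then show ?thesis by (rule finite_subset) (simp add: finite_PiE)
qed

lemma colour_class_weight_bounded:
  assumes "finite V" "\<kappa> \<in> V \<rightarrow>\<^sub>E {1..q}"
  shows "colour_class_weight V w \<kappa> \<in> bounded_exponents q (sum w V)"
proof -
  have "colour_class_weight V w \<kappa> i \<le> sum w V" for i
    unfolding colour_class_weight_def using assms(1) by (intro sum_mono2) auto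
  moreover have "colour_class_weight V w \<kappa> i = 0" if "i \<notin> {1..q}" for i
    using assms(2) that unfolding colour_class_weight_def by (auto intro!: sum.neutral)
  ultimately show ?thesis unfolding bounded_exponents_def by blast
qed

text \<open>Specialising \<open>x\<^sub>1 = \<dots> = x\<^sub>q = 1\<close> and all other variables to \<open>0\<close>: a colouring uses only the
  colours \<open>1..q\<close> exactly when its colour class weights lie in \<^term>\<open>bounded_exponents q (sum w V)\<close>.\<close>

lemma num_colourings_eq_sum_weighted_csf_coeff:
  assumes "finite V" "\<And>x. x \<in> V \<Longrightarrow> 0 < w x"
  shows "num_colourings V E q = (\<Sum>\<alpha>\<in>bounded_exponents q (sum w V). weighted_csf_coeff V E w \<alpha>)"
proof -
  let ?A = "{\<kappa>. \<kappa> \<in> V \<rightarrow>\<^sub>E {1..q} \<and> proper_colouring V E \<kappa>}"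
  let ?B = "bounded_exponents q (sum w V)"
  let ?fibre = "\<lambda>\<alpha>. {\<kappa> \<in> ?A. colour_class_weight V w \<kappa> = \<alpha>}"
  have finite_A: "finite ?A"
    by (rule finite_subset[of _ "V \<rightarrow>\<^sub>E {1..q}"]) (use assms(1) in \<open>auto intro: finite_PiE\<close>)
  have "colour_class_weight V w \<kappa> \<in> ?B" if "\<kappa> \<in> ?A" for \<kappa>
    using colour_class_weight_bounded[OF assms(1)] that by blast
  then have "?A = (\<Union>\<alpha>\<in>?B. ?fibre \<alpha>)" by blast
  then have "num_colourings V E q = card (\<Union>\<alpha>\<in>?B. ?fibre \<alpha>)"
    unfolding num_colourings_def by (rule arg_cong[where f = card])
  also have "\<dots> = (\<Sum>\<alpha>\<in>?B. card (?fibre \<alpha>))"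
  proof (rule card_UN_disjoint)
    show "\<forall>\<alpha>\<in>?B. finite (?fibre \<alpha>)" using finite_A by (auto elim: rev_finite_subset)
    show "finite ?B" by (rule finite_bounded_exponents)
    show "\<forall>\<alpha>\<in>?B. \<forall>\<beta>\<in>?B. \<alpha> \<noteq> \<beta> \<longrightarrow> ?fibre \<alpha> \<inter> ?fibre \<beta> = {}" by blast
  qed
  also have "\<dots> = (\<Sum>\<alpha>\<in>?B. weighted_csf_coeff V E w \<alpha>)"
  proof (rule sum.cong)
    fix \<alpha> assume \<alpha>: "\<alpha> \<in> ?B"
    have "\<kappa> v \<in> {1..q}" if \<kappa>: "\<kappa> \<in> weighted_colourings V E w \<alpha>" and v: "v \<in> V" for \<kappa> v
    proof (rule ccontr)
      assume "\<kappa> v \<notin> {1..q}"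
      then have "colour_class_weight V w \<kappa> (\<kappa> v) = 0"
        using \<kappa> \<alpha> by (simp add: weighted_colourings_def bounded_exponents_def)
      moreover have "w v \<le> colour_class_weight V w \<kappa> (\<kappa> v)"
        unfolding colour_class_weight_def using assms(1) v by (intro member_le_sum) auto
      ultimately show False using assms(2)[OF v] by simp
    qed
    then have "weighted_colourings V E w \<alpha> = ?fibre \<alpha>"
      by (auto simp: weighted_colourings_def PiE_iff)
    then show "card (?fibre \<alpha>) = weighted_csf_coeff V E w \<alpha>" by (simp add: weighted_csf_coeff_def)
  qed simp
  finally show ?thesis .
qed

lemma num_colourings_last_edge_recurrence:
  assumes "valid_forest L" "j < length L" "2 \<le> length (L ! j)"
  shows "num_colourings (forest_vertices (cut_last_edge L j)) path_adj q =
    num_colourings (forest_vertices L) path_adj q + num_colourings (forest_vertices (contract_last_edge L j)) path_adj q"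
proof -
  have count: "num_colourings (forest_vertices L') path_adj q =
      (\<Sum>\<alpha>\<in>bounded_exponents q (sum_list (map sum_list L')). forest_csf_coeff L' \<alpha>)"
    if "valid_forest L'" for L'
    using num_colourings_eq_sum_weighted_csf_coeff[OF finite_forest_vertices valid_forest_weight_pos[OF that]]
    by (simp add: sum_forest_weight forest_csf_coeff_def)
  show ?thesis
    unfolding count[OF assms(1)] count[OF valid_forest_cut_last_edge[OF assms]]
      count[OF valid_forest_contract_last_edge[OF assms]]
      total_weight_cut_last_edge[OF assms(2,3)] path_sums_contract_last_edge[OF assms(2,3)]
    by (simp add: forest_csf_coeff_last_edge_recurrence[OF assms] sum.distrib)
qed

lemma num_colourings_forest:
  assumes "valid_forest L"
  shows "(of_nat (num_colourings (forest_vertices L) path_adj q) :: 'a :: comm_ring_1) =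
    of_nat q ^ length L * (of_nat q - 1) ^ num_forest_edges L"
  using assms
proof (induction "num_forest_edges L" arbitrary: L rule: less_induct)
  case less
  show ?case
  proof (cases "\<exists>j<length L. 2 \<le> length (L ! j)")
    case False
    note single = valid_forest_without_edges[OF less.prems False]
    have "proper_colouring (forest_vertices L) path_adj \<kappa>" for \<kappa>
      using single(1) unfolding proper_colouring_def path_adj_def by (auto simp: nth_mem)
    then show ?thesis using single(2,3) by (simp add: num_colourings_def card_PiE)
  next
    case True
    then obtain j where j: "j < length L" "2 \<le> length (L ! j)" by blast
    let ?e = "num_forest_edges L"
    note invariants = last_edge_forest_invariants[OF less.prems j]
    have "(of_nat (num_colourings (forest_vertices L) path_adj q) :: 'a) =
        of_nat (num_colourings (forest_vertices (cut_last_edge L j)) path_adj q) -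
        of_nat (num_colourings (forest_vertices (contract_last_edge L j)) path_adj q)"
      by (simp add: num_colourings_last_edge_recurrence[OF less.prems j])
    also have "\<dots> = of_nat q ^ Suc (length L) * (of_nat q - 1) ^ (?e - 1) -
        of_nat q ^ length L * (of_nat q - 1) ^ (?e - 1)"
      using less.hyps[of "cut_last_edge L j"] less.hyps[of "contract_last_edge L j"] invariants by simp
    also have "\<dots> = of_nat q ^ length L * (of_nat q - 1) ^ ?e"
      using invariants(1) by (cases ?e) (simp_all add: algebra_simps)
    finally show ?thesis .
  qed
qed

lemma num_colourings_path_graph:
  assumes "lam \<in> partitions n"
  shows "(of_nat (num_colourings (path_vertices lam) (path_edges lam) q) :: 'a :: comm_ring_1) =
    of_nat q ^ length lam * (of_nat q - 1) ^ (n - length lam)"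
  using num_colourings_forest[OF unit_forest_partition(1)[OF assms]] unit_forest_partition[OF assms]
  by (simp add: forest_vertices_unit_forest path_edges_eq_path_adj)

lemma num_colourings_eq_sum_csf_coeff:
  "finite V \<Longrightarrow> num_colourings V E q = (\<Sum>\<alpha>\<in>bounded_exponents q (card V). csf_coeff V E \<alpha>)"
  using num_colourings_eq_sum_weighted_csf_coeff[of V "\<lambda>_. 1" E q] by (simp add: csf_coeff_eq_weighted)

lemma num_colourings_tree_coeffs:
  assumes "simple_graph V E"
  shows "(of_nat (num_colourings V E q) :: rat) = (\<Sum>lam\<in>partitions (card V).
    tree_coeffs V E lam * (of_nat q ^ length lam * (of_nat q - 1) ^ (card V - length lam)))"
proof -
  let ?P = "partitions (card V)" and ?B = "bounded_exponents q (card V)"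
  obtain a where a: "\<And>\<alpha>. of_nat (csf_coeff V E \<alpha>) = (\<Sum>lam\<in>?P. a lam * path_csf_coeff lam \<alpha>)"
    using csf_spanned_by_path_csf[OF assms] unfolding spanned_by_def by blast
  define a' where "a' lam = (if lam \<in> ?P then a lam else 0)" for lam
  have csf: "of_nat (csf_coeff V E \<alpha>) = (\<Sum>lam\<in>?P. a' lam * path_csf_coeff lam \<alpha>)" for \<alpha>
    unfolding a a'_def by simp
  then have tree: "tree_coeffs V E = a'" by (intro tree_coeffs_eqI) (simp_all add: a'_def)
  have card_path: "card (path_vertices lam) = card V" if "lam \<in> ?P" for lam
    using that unfolding forest_vertices_unit_forest[symmetric] card_forest_vertices
    by (simp add: unit_forest_def comp_def partitions_def)
  have "finite V" using assms by (simp add: simple_graph_def)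
  then have "(of_nat (num_colourings V E q) :: rat) = (\<Sum>\<alpha>\<in>?B. \<Sum>lam\<in>?P. a' lam * path_csf_coeff lam \<alpha>)"
    by (simp add: num_colourings_eq_sum_csf_coeff csf)
  also have "\<dots> = (\<Sum>lam\<in>?P. a' lam * (\<Sum>\<alpha>\<in>?B. path_csf_coeff lam \<alpha>))"
    by (subst sum.swap) (simp add: sum_distrib_left)
  also have "\<dots> = (\<Sum>lam\<in>?P. a' lam * (of_nat q ^ length lam * (of_nat q - 1) ^ (card V - length lam)))"
  proof (rule sum.cong)
    fix lam assume lam: "lam \<in> ?P"
    have "finite (path_vertices lam)"
      unfolding forest_vertices_unit_forest[symmetric] by (rule finite_forest_vertices)
    then have "(\<Sum>\<alpha>\<in>?B. path_csf_coeff lam \<alpha>) = of_nat (num_colourings (path_vertices lam) (path_edges lam) q)"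
      using card_path[OF lam] by (simp add: path_csf_coeff_def num_colourings_eq_sum_csf_coeff)
    then show "a' lam * (\<Sum>\<alpha>\<in>?B. path_csf_coeff lam \<alpha>) =
        a' lam * (of_nat q ^ length lam * (of_nat q - 1) ^ (card V - length lam))"
      by (simp add: num_colourings_path_graph[OF lam])
  qed simp
  finally show ?thesis unfolding tree .
qed

lemma poly_eqI_of_nat:
  fixes p r :: "'a :: {idom, ring_char_0} poly"
  assumes "\<And>q::nat. poly p (of_nat q) = poly r (of_nat q)"
  shows "p = r"
proof (rule ccontr)
  assume "p \<noteq> r"
  then have "finite {x. poly (p - r) x = 0}" by (intro poly_roots_finite) simp
  moreover have "range (of_nat :: nat \<Rightarrow> 'a) \<subseteq> {x. poly (p - r) x = 0}" using assms by auto
  moreover have "infinite (range (of_nat :: nat \<Rightarrow> 'a))" by (rule range_inj_infinite) (simp add: inj_on_def)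
  ultimately show False using finite_subset by blast
qed

lemma chromatic_poly_tree_expansion:
  assumes "simple_graph V E"
  shows "chromatic_poly V E = (\<Sum>lam\<in>partitions (card V).
    smult (tree_coeffs V E lam) ([:0, 1:] ^ length lam * [:- 1, 1:] ^ (card V - length lam)))"
    (is "_ = ?\<chi>")
  unfolding chromatic_poly_def
proof (rule the_equality)
  show "\<forall>q::nat. poly ?\<chi> (of_nat q) = of_nat (card {\<kappa>. \<kappa> \<in> V \<rightarrow>\<^sub>E {1..q} \<and> proper_colouring V E \<kappa>})"
    using num_colourings_tree_coeffs[OF assms] by (simp add: poly_sum num_colourings_def)
  then show "p = ?\<chi>"
    if "\<forall>q::nat. poly p (of_nat q) = of_nat (card {\<kappa>. \<kappa> \<in> V \<rightarrow>\<^sub>E {1..q} \<and> proper_colouring V E \<kappa>})" for p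
    using that by (intro poly_eqI_of_nat) simp
qed

lemma coeff_x_power_mult_x_minus_1_power:
  "coeff ([:0, 1:] ^ m * [:- 1, 1:] ^ r) k =
    (if k < m then 0 else of_nat (r choose (k - m)) * (- 1) ^ (r - (k - m)) :: 'a :: comm_ring_1)"
proof -
  have "coeff ([:- 1, 1:] ^ r) i = (of_nat (r choose i) * (- 1) ^ (r - i) :: 'a)" for i
  proof (cases "i \<le> r")
    case False
    then have "degree ([:- 1 :: 'a, 1:] ^ r) < i" using degree_power_le[of "[:- 1 :: 'a, 1:]" r] by simp
    then show ?thesis using False by (simp add: coeff_eq_0 binomial_eq_0)
  qed (simp add: coeff_linear_poly_power)
  then show ?thesis by (simp add: monom_altdef[of 1, simplified, symmetric] coeff_monom_mult)
qed

section \<open>The binomial transform\<close>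

text \<open>For \<open>degree p \<le> n\<close> this is \<open>(x - 1)^n p(x / (x - 1))\<close>. As \<open>x \<mapsto> x / (x - 1)\<close> is an
  involution, so is the transform; in particular it sends \<open>x^l (x - 1)^(n - l)\<close> back to \<open>x^l\<close>.\<close>

definition binomial_transform :: "nat \<Rightarrow> 'a :: comm_ring_1 poly \<Rightarrow> 'a poly" where
  "binomial_transform n p = (\<Sum>m\<le>n. smult (coeff p m) ([:0, 1:] ^ m * [:- 1, 1:] ^ (n - m)))"

lemma smult_sum_right: "smult a (\<Sum>i\<in>S. f i) = (\<Sum>i\<in>S. smult a (f i))"
  by (induction S rule: infinite_finite_induct) (simp_all add: smult_add_right)

lemma binomial_transform_sum:
  "binomial_transform n (\<Sum>i\<in>S. smult (a i) (p i)) = (\<Sum>i\<in>S. smult (a i) (binomial_transform n (p i)))"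
  unfolding binomial_transform_def coeff_sum coeff_smult smult_sum smult_sum_right
  by (subst sum.swap) (simp add: smult_smult)

lemma binomial_transform_x_power_mult_x_minus_1_power:
  assumes "l \<le> n"
  shows "binomial_transform n ([:0, 1:] ^ l * [:- 1, 1:] ^ (n - l)) = ([:0, 1:] ^ l :: 'a :: comm_ring_1 poly)"
proof -
  define r where "r = n - l"
  let ?x = "[:0, 1:] :: 'a poly" and ?y = "[:- 1, 1:] :: 'a poly"
  define c where "c j = (of_nat (r choose j) * (- 1) ^ (r - j) :: 'a)" for j
  have "binomial_transform n (?x ^ l * ?y ^ r) = (\<Sum>m\<le>n. smult (if m < l then 0 else c (m - l)) (?x ^ m * ?y ^ (n - m)))"
    unfolding binomial_transform_def coeff_x_power_mult_x_minus_1_power c_def ..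
  also have "\<dots> = (\<Sum>m\<in>{l..n}. smult (c (m - l)) (?x ^ m * ?y ^ (n - m)))"
    by (rule sum.mono_neutral_cong_right) auto
  also have "\<dots> = (\<Sum>j\<in>{0..r}. smult (c j) (?x ^ (j + l) * ?y ^ (r - j)))"
    using sum.shift_bounds_cl_nat_ivl[of "\<lambda>m. smult (c (m - l)) (?x ^ m * ?y ^ (n - m))" 0 l r] assms
    by (simp add: r_def add.commute)
  also have "\<dots> = (\<Sum>j\<le>r. ?x ^ l * (of_nat (r choose j) * ?x ^ j * (- ?y) ^ (r - j)))"
  proof (rule sum.cong)
    fix j
    have neg_one_power: "(- 1 :: 'a poly) ^ k = [:(- 1) ^ k:]" for k by (induction k) auto
    show "smult (c j) (?x ^ (j + l) * ?y ^ (r - j)) = ?x ^ l * (of_nat (r choose j) * ?x ^ j * (- ?y) ^ (r - j))"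
      unfolding power_minus[of ?y] neg_one_power of_nat_poly c_def by (simp add: power_add algebra_simps)
  qed auto
  also have "\<dots> = ?x ^ l * (?x + - ?y) ^ r"
    by (simp only: sum_distrib_left binomial_ring)
  finally show ?thesis by (simp add: r_def pCons_one)
qed

lemma coeff_binomial_transform:
  fixes p :: "'a :: comm_ring_1 poly"
  assumes "coeff p 0 = 0" and "degree p \<le> n"
  shows "coeff (binomial_transform n p) k =
    (- 1) ^ (n + k) * (\<Sum>m = 1..k. of_nat ((n - m) choose (k - m)) * coeff p m)"
proof -
  define g where "g m = (- 1) ^ (n + k) * (of_nat ((n - m) choose (k - m)) * coeff p m)" for m
  have summand: "coeff p m * coeff ([:0, 1:] ^ m * [:- 1, 1:] ^ (n - m)) k = (if m \<in> {1..k} then g m else 0)"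
    if "m \<le> n" for m
  proof (cases "m \<in> {1..k}")
    case True
    show ?thesis
    proof (cases "k \<le> n")
      case True
      then have "(- 1 :: 'a) ^ (n + k) = (- 1) ^ (n - k)"
        using power_add[of "- 1 :: 'a" "n - k" "2 * k"] by (simp add: power_mult add.commute)
      with \<open>m \<in> {1..k}\<close> True show ?thesis
        by (simp add: coeff_x_power_mult_x_minus_1_power g_def algebra_simps)
    next
      case False
      with \<open>m \<in> {1..k}\<close> that show ?thesis
        by (simp add: coeff_x_power_mult_x_minus_1_power g_def binomial_eq_0)
    qed
  next
    case False
    then have "m = 0 \<or> k < m" by auto
    then show ?thesis using False assms(1) by (auto simp: coeff_x_power_mult_x_minus_1_power)
  qed
  have "coeff (binomial_transform n p) k = (\<Sum>m\<le>n. if m \<in> {1..k} then g m else 0)"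
    unfolding binomial_transform_def coeff_sum coeff_smult using summand by (intro sum.cong) auto
  also have "\<dots> = (\<Sum>m\<in>{..n} \<inter> {1..k}. g m)" by (rule sum.inter_restrict[symmetric]) simp
  also have "\<dots> = (\<Sum>m\<in>{1..k}. g m)"
    using assms(2) by (intro sum.mono_neutral_left) (auto simp: g_def coeff_eq_0)
  finally show ?thesis by (simp add: g_def sum_distrib_left)
qed

lemma chromatic_poly_coeff_0_and_degree:
  assumes "simple_graph V E" "1 \<le> card V"
  shows "coeff (chromatic_poly V E) 0 = 0" and "degree (chromatic_poly V E) \<le> card V"
proof -
  have coeff: "coeff (chromatic_poly V E) i = (\<Sum>lam\<in>partitions (card V). tree_coeffs V E lam *
      (if i < length lam then 0 else of_nat ((card V - length lam) choose (i - length lam)) *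
        (- 1) ^ (card V - length lam - (i - length lam))))" for i
    unfolding chromatic_poly_tree_expansion[OF assms(1)] coeff_sum coeff_smult
    by (simp add: coeff_x_power_mult_x_minus_1_power)
  show "coeff (chromatic_poly V E) 0 = 0"
    unfolding coeff using partitions_length_pos assms(2) by (intro sum.neutral) force
  show "degree (chromatic_poly V E) \<le> card V"
    by (rule degree_le, unfold coeff) (auto intro!: sum.neutral simp: binomial_eq_0 dest: partitions_length_le)
qed

lemma tree_poly_eq_binomial_transform:
  assumes "simple_graph V E"
  shows "tree_poly V E = binomial_transform (card V) (chromatic_poly V E)"
  unfolding chromatic_poly_tree_expansion[OF assms] binomial_transform_sum tree_poly_def monom_altdef
  by (intro sum.cong refl) (simp add: binomial_transform_x_power_mult_x_minus_1_power partitions_length_le)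

theorem theorem3p2:
  fixes V :: "'a set" and E :: "'a \<Rightarrow> 'a \<Rightarrow> bool" and k :: nat
  assumes "simple_graph V E" and "card V \<ge> 1" and "k \<ge> 1"
  shows "coeff (tree_poly V E) k =
    (-1) ^ (card V + k) *
      (\<Sum>m = 1..k. of_nat ((card V - m) choose (k - m)) * coeff (chromatic_poly V E) m)"
  using coeff_binomial_transform[OF chromatic_poly_coeff_0_and_degree[OF assms(1,2)]]
  by (simp add: tree_poly_eq_binomial_transform[OF assms(1)])

end
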